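(* There is a constant $c$ such that for every positive integer $n$, the number of minimal $P_n$-obstructions and the number of minimal $C_n$-obstructions (each counted up to isomorphism) are both at most $c\,n^2$.
   Context: All graphs are finite, simple and loopless. $P_n$ and $C_n$ denote the path and cycle on $n$ vertices ($P_1=K_1$, $P_2=K_2$). A full-homomorphism $\varphi\colon G\to H$ is a map $V(G)\to V(H)$ such that for all $x,y\in V(G)$, $xy\in E(G)$ if and only if $\varphi(x)\varphi(y)\in E(H)$. A full $H$-colouring of $G$ is a full-homomorphism $G\to H$. A minimal $H$-obstruction is a graph $G$ that admits no full $H$-colouring while every proper induced subgraph of $G$ admits one. *)

theory Defs
  imports Complex_Main
begin

text \<open>A finite simple loopless graph: a finite vertex set V and a set E of
  2-element subsets of V (vertices are natural numbers; every finite graph is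
  isomorphic to such a graph).\<close>
type_synonym graph = "nat set \<times> nat set set"

definition verts :: "graph \<Rightarrow> nat set" where "verts G = fst G"
definition edges :: "graph \<Rightarrow> nat set set" where "edges G = snd G"

definition wf_graph :: "graph \<Rightarrow> bool" where
  "wf_graph G \<longleftrightarrow> finite (verts G) \<and>
     (\<forall>e\<in>edges G. \<exists>x y. x \<noteq> y \<and> x \<in> verts G \<and> y \<in> verts G \<and> e = {x, y})"

definition adj :: "graph \<Rightarrow> nat \<Rightarrow> nat \<Rightarrow> bool" where
  "adj G x y \<longleftrightarrow> {x, y} \<in> edges G"

definition full_hom :: "(nat \<Rightarrow> nat) \<Rightarrow> graph \<Rightarrow> graph \<Rightarrow> bool" where
  "full_hom \<phi> G H \<longleftrightarrow> (\<forall>x\<in>verts G. \<phi> x \<in> verts H) \<and>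
     (\<forall>x\<in>verts G. \<forall>y\<in>verts G. adj G x y \<longleftrightarrow> adj H (\<phi> x) (\<phi> y))"

definition full_colourable :: "graph \<Rightarrow> graph \<Rightarrow> bool" where
  "full_colourable G H \<longleftrightarrow> (\<exists>\<phi>. full_hom \<phi> G H)"

definition induced :: "graph \<Rightarrow> nat set \<Rightarrow> graph" where
  "induced G S = (S, {e \<in> edges G. e \<subseteq> S})"

definition minimal_obstruction :: "graph \<Rightarrow> graph \<Rightarrow> bool" where
  "minimal_obstruction H G \<longleftrightarrow> wf_graph G \<and> \<not> full_colourable G H \<and>
     (\<forall>S. S \<subset> verts G \<longrightarrow> full_colourable (induced G S) H)"

definition graph_iso :: "graph \<Rightarrow> graph \<Rightarrow> bool" where
  "graph_iso G H \<longleftrightarrow> (\<exists>f. bij_betw f (verts G) (verts H) \<and>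
     (\<forall>x\<in>verts G. \<forall>y\<in>verts G. adj G x y \<longleftrightarrow> adj H (f x) (f y)))"

definition path_graph :: "nat \<Rightarrow> graph" where
  "path_graph n = ({0..<n}, {{i, Suc i} | i. Suc i < n})"

text \<open>Cycle C_n on vertices 0..n-1 (meaningful for n \<ge> 3).\<close>
definition cycle_graph :: "nat \<Rightarrow> graph" where
  "cycle_graph n = ({0..<n}, {{i, (Suc i) mod n} | i. i < n})"

definition obstructions_up_to_iso_at_most :: "graph \<Rightarrow> real \<Rightarrow> bool" where
  "obstructions_up_to_iso_at_most H N \<longleftrightarrow>
     (\<forall>\<S>. finite \<S> \<longrightarrow> (\<forall>G\<in>\<S>. minimal_obstruction H G) \<longrightarrow>
        (\<forall>G\<in>\<S>. \<forall>G'\<in>\<S>. G \<noteq> G' \<longrightarrow> \<not> graph_iso G G') \<longrightarrow>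
        real (card \<S>) \<le> N)"

end

theory Submission
  imports Defs
begin

text \<open>Both \<open>P\<^sub>n\<close> (with \<open>N = n + 1\<close>) and \<open>C\<^sub>n\<close> (with \<open>N = n\<close>) are graphs of maximum degree two
  in which every vertex set \<open>S\<close> spans at least \<open>2 |S| - N\<close> edges, the vertices \<open>0, \<dots>, N - 2\<close>
  induce a path, and every cycle is spanning. A minimal obstruction \<open>G\<close> for such a target is
  point-determining. If \<open>G\<close> has a vertex of degree three, that vertex, its neighbours and
  vertices separating the neighbours already admit no full colouring, so \<open>G\<close> has at most seven
  vertices. Otherwise \<open>G\<close> either contains a cycle, and then it is \<open>C\<^sub>k\<close> or \<open>C\<^sub>k\<close> plus an isolated
  vertex with \<open>k \<le> N\<close>, or it is a linear forest. Deleting suitable vertices of a linear forest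
  obstruction shows that its components have 1, 2, 4 or 6 vertices, at most one is a single
  vertex, and the number of vertices plus the number of components is \<open>N + 1\<close> or \<open>N + 2\<close>. As a
  linear forest is determined by the sizes of its components, this leaves \<open>O(N\<^sup>2)\<close> obstructions.\<close>

section \<open>Isomorphisms and point-determining graphs\<close>

definition point_determining :: "graph \<Rightarrow> bool" where
  "point_determining G \<longleftrightarrow> (\<forall>x\<in>verts G. \<forall>y\<in>verts G. x \<noteq> y \<longrightarrow> \<not> adj G x y \<longrightarrow>
     (\<exists>z\<in>verts G. adj G x z \<noteq> adj G y z))"

definition isomorphism :: "(nat \<Rightarrow> nat) \<Rightarrow> graph \<Rightarrow> graph \<Rightarrow> bool" where
  "isomorphism f G G' \<longleftrightarrow> bij_betw f (verts G) (verts G') \<and>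
     (\<forall>x\<in>verts G. \<forall>y\<in>verts G. adj G x y \<longleftrightarrow> adj G' (f x) (f y))"

lemma adj_commute: "adj G x y = adj G y x"
  unfolding adj_def by (simp add: insert_commute)

lemma wf_graph_adjD: "wf_graph G \<Longrightarrow> adj G x y \<Longrightarrow> x \<in> verts G \<and> y \<in> verts G \<and> x \<noteq> y"
  unfolding wf_graph_def adj_def by (auto simp: doubleton_eq_iff)

lemma wf_graph_not_adj_self: "wf_graph G \<Longrightarrow> \<not> adj G x x"
  using wf_graph_adjD by blast

lemma verts_induced [simp]: "verts (induced G S) = S"
  by (simp add: induced_def verts_def)

lemma adj_induced: "adj (induced G S) x y \<longleftrightarrow> adj G x y \<and> x \<in> S \<and> y \<in> S"
  by (auto simp: induced_def adj_def edges_def)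

lemma wf_graph_induced:
  assumes w: "wf_graph G" and S: "S \<subseteq> verts G"
  shows "wf_graph (induced G S)"
proof -
  have "finite S" using w S finite_subset unfolding wf_graph_def by blast
  moreover have "\<exists>x y. x \<noteq> y \<and> x \<in> S \<and> y \<in> S \<and> e = {x, y}" if e: "e \<in> edges (induced G S)" for e
  proof -
    have e': "e \<in> edges G" "e \<subseteq> S" using e by (auto simp: induced_def edges_def)
    then obtain x y where "x \<noteq> y" "e = {x, y}" using w unfolding wf_graph_def by blast
    then show ?thesis using e' by auto
  qed
  ultimately show ?thesis unfolding wf_graph_def by simp
qed

lemma graph_eqI:
  assumes "wf_graph G" "wf_graph G'" "verts G = verts G'" "\<And>x y. adj G x y \<longleftrightarrow> adj G' x y"
  shows "G = G'"
proof -
  have "edges G \<subseteq> edges G'" if w: "wf_graph G" and a: "\<And>x y. adj G x y \<Longrightarrow> adj G' x y" for G G'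
  proof
    fix e assume e: "e \<in> edges G"
    then obtain x y where "e = {x, y}" using w unfolding wf_graph_def by blast
    then show "e \<in> edges G'" using a e unfolding adj_def by blast
  qed
  then have "edges G = edges G'" using assms(1,2,4) by (meson subset_antisym)
  then show ?thesis using assms(3) unfolding verts_def edges_def by (simp add: prod_eq_iff)
qed

lemma graph_iso_iff_isomorphism: "graph_iso G G' \<longleftrightarrow> (\<exists>f. isomorphism f G G')"
  by (simp add: graph_iso_def isomorphism_def)

lemma isomorphism_full_hom: "isomorphism f G G' \<Longrightarrow> full_hom f G G'"
  unfolding isomorphism_def full_hom_def bij_betw_def by auto

lemma isomorphism_inv_into:
  assumes "isomorphism f G G'"
  shows "isomorphism (inv_into (verts G) f) G' G"
proof -
  have f: "bij_betw f (verts G) (verts G')" using assms by (simp add: isomorphism_def)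
  then have g: "bij_betw (inv_into (verts G) f) (verts G') (verts G)" by (rule bij_betw_inv_into)
  have "adj G' x y = adj G (inv_into (verts G) f x) (inv_into (verts G) f y)"
    if "x \<in> verts G'" "y \<in> verts G'" for x y
    using assms that bij_betwE[OF g] bij_betw_inv_into_right[OF f] unfolding isomorphism_def by metis
  then show ?thesis using g unfolding isomorphism_def by blast
qed

lemma isomorphism_comp:
  assumes f: "isomorphism f G G'" and g: "isomorphism g G' G''"
  shows "isomorphism (g \<circ> f) G G''"
proof -
  have "adj G x y = adj G'' ((g \<circ> f) x) ((g \<circ> f) y)" if "x \<in> verts G" "y \<in> verts G" for x y
  proof -
    have "f x \<in> verts G'" "f y \<in> verts G'" using f that unfolding isomorphism_def by (meson bij_betwE)+
    then show ?thesis using f g that unfolding isomorphism_def by simp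
  qed
  then show ?thesis using f g bij_betw_trans unfolding isomorphism_def by blast
qed

lemma graph_iso_sym: "graph_iso G G' \<Longrightarrow> graph_iso G' G"
  unfolding graph_iso_iff_isomorphism by (meson isomorphism_inv_into)

lemma graph_iso_trans: "graph_iso G G' \<Longrightarrow> graph_iso G' G'' \<Longrightarrow> graph_iso G G''"
  unfolding graph_iso_iff_isomorphism by (meson isomorphism_comp)

lemma full_hom_comp: "full_hom \<phi> G H \<Longrightarrow> full_hom \<psi> H K \<Longrightarrow> full_hom (\<psi> \<circ> \<phi>) G K"
  unfolding full_hom_def by auto

lemma full_colourable_isomorphism:
  "isomorphism f G G' \<Longrightarrow> full_colourable G' H \<Longrightarrow> full_colourable G H"
  unfolding full_colourable_def by (meson full_hom_comp isomorphism_full_hom)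

lemma isomorphism_induced:
  assumes "isomorphism f G G'" "S \<subseteq> verts G"
  shows "isomorphism f (induced G S) (induced G' (f ` S))"
proof -
  have "bij_betw f S (f ` S)"
    using assms unfolding isomorphism_def bij_betw_def by (meson inj_on_subset inj_on_imp_bij_betw)
  moreover have "adj (induced G S) x y = adj (induced G' (f ` S)) (f x) (f y)" if "x \<in> S" "y \<in> S" for x y
    using assms that unfolding isomorphism_def by (auto simp: adj_induced)
  ultimately show ?thesis unfolding isomorphism_def by simp
qed

lemma minimal_obstruction_isomorphism:
  assumes ob: "minimal_obstruction H G" and f: "isomorphism f G G'" and wf: "wf_graph G'"
  shows "minimal_obstruction H G'"
proof -
  have fV: "f ` verts G = verts G'" using f by (simp add: isomorphism_def bij_betw_def)
  have "full_colourable (induced G' S') H" if S': "S' \<subset> verts G'" for S'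
  proof -
    let ?S = "{x \<in> verts G. f x \<in> S'}"
    have fS: "f ` ?S = S'"
    proof
      show "S' \<subseteq> f ` ?S"
      proof
        fix y assume y: "y \<in> S'"
        then have "y \<in> f ` verts G" using S' fV by blast
        then obtain x where "x \<in> verts G" "f x = y" by blast
        then show "y \<in> f ` ?S" using y by blast
      qed
    qed blast
    have "?S \<subset> verts G"
    proof
      show "?S \<noteq> verts G"
      proof
        assume "?S = verts G"
        then show False using fS fV S' by simp
      qed
    qed blast
    then have "full_colourable (induced G ?S) H"
      using ob unfolding minimal_obstruction_def by blast
    moreover have "isomorphism f (induced G ?S) (induced G' S')"
      using isomorphism_induced[OF f, of ?S] fS by simp
    ultimately show ?thesis using full_colourable_isomorphism[OF isomorphism_inv_into] by blast
  qed
  moreover have "\<not> full_colourable G' H"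
    using ob full_colourable_isomorphism[OF f] unfolding minimal_obstruction_def by blast
  ultimately show ?thesis using wf unfolding minimal_obstruction_def by blast
qed

lemma full_hom_eq_imp_twins:
  assumes "full_hom \<phi> F H" "wf_graph H" "x \<in> verts F" "y \<in> verts F" "\<phi> x = \<phi> y"
  shows "\<not> adj F x y \<and> (\<forall>z\<in>verts F. adj F x z = adj F y z)"
proof
  have A: "\<And>u v. u \<in> verts F \<Longrightarrow> v \<in> verts F \<Longrightarrow> adj F u v = adj H (\<phi> u) (\<phi> v)"
    using assms(1) by (simp add: full_hom_def)
  show "\<not> adj F x y" using A[OF assms(3,4)] assms(5) wf_graph_not_adj_self[OF assms(2)] by simp
  show "\<forall>z\<in>verts F. adj F x z = adj F y z" using A assms(3,4,5) by simp
qed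

lemma full_hom_inj_on:
  assumes "full_hom \<phi> F H" "wf_graph H" "point_determining F"
  shows "inj_on \<phi> (verts F)"
proof (rule inj_onI)
  fix x y assume "x \<in> verts F" "y \<in> verts F" "\<phi> x = \<phi> y"
  with full_hom_eq_imp_twins[OF assms(1,2) this] assms(3) show "x = y"
    unfolding point_determining_def by blast
qed

lemma full_hom_separates:
  assumes "wf_graph H" "full_hom \<phi> (induced G T) H"
    and "u \<in> T" "w \<in> T" "z \<in> T" "adj G u w \<or> adj G u z \<noteq> adj G w z"
  shows "\<phi> u \<noteq> \<phi> w"
proof
  assume "\<phi> u = \<phi> w"
  from full_hom_eq_imp_twins[OF assms(2,1) _ _ this] assms(3-5)
  have "\<not> adj (induced G T) u w" "adj (induced G T) u z = adj (induced G T) w z" by auto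
  then show False using assms(3-6) by (simp add: adj_induced)
qed

lemma minimal_obstruction_point_determining:
  assumes ob: "minimal_obstruction H G" and wfH: "wf_graph H"
  shows "point_determining G"
  unfolding point_determining_def
proof (intro ballI impI)
  fix x y assume x: "x \<in> verts G" and y: "y \<in> verts G" and "x \<noteq> y" "\<not> adj G x y"
  show "\<exists>z\<in>verts G. adj G x z \<noteq> adj G y z"
  proof (rule ccontr)
    assume "\<not> ?thesis"
    then have twin: "\<And>z. z \<in> verts G \<Longrightarrow> adj G x z = adj G y z" by blast
    have wfG: "wf_graph G" using ob unfolding minimal_obstruction_def by blast
    let ?S = "verts G - {x}"
    have "?S \<subset> verts G" using x by blast
    then obtain \<phi> where \<phi>: "full_hom \<phi> (induced G ?S) H"
      using ob unfolding minimal_obstruction_def full_colourable_def by blast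
    define \<tau> where "\<tau> = id(x := y)"
    have \<tau>S: "\<tau> a \<in> ?S" if "a \<in> verts G" for a
      using that y \<open>x \<noteq> y\<close> by (simp add: \<tau>_def)
    have \<tau>_adj: "adj G a b = adj G (\<tau> a) (\<tau> b)" if a: "a \<in> verts G" and b: "b \<in> verts G" for a b
    proof (cases "a = x"; cases "b = x")
      assume "a \<noteq> x" "b = x"
      then show ?thesis using twin[OF a] adj_commute[of G] by (simp add: \<tau>_def)
    qed (use twin[OF a] twin[OF b] wf_graph_not_adj_self[OF wfG] in \<open>simp_all add: \<tau>_def\<close>)
    have "full_hom \<tau> G (induced G ?S)"
      unfolding full_hom_def
    proof (intro conjI ballI)
      fix a b assume a: "a \<in> verts G" and b: "b \<in> verts G"
      show "adj G a b = adj (induced G ?S) (\<tau> a) (\<tau> b)"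
        using \<tau>_adj[OF a b] \<tau>S[OF a] \<tau>S[OF b] by (simp add: adj_induced)
    qed (use \<tau>S in \<open>simp only: verts_induced\<close>)
    then have "full_hom (\<phi> \<circ> \<tau>) G H" using \<phi> by (rule full_hom_comp)
    then show False using ob unfolding minimal_obstruction_def full_colourable_def by blast
  qed
qed

section \<open>Runs of natural numbers and linear embeddings\<close>

definition consecutive :: "nat \<Rightarrow> nat \<Rightarrow> bool" where
  "consecutive a b \<longleftrightarrow> b = Suc a \<or> a = Suc b"

text \<open>\<open>{s..t}\<close> is a maximal interval of \<open>A\<close>; the left end is tested through \<open>Suc x = s\<close>
  to avoid the truncated \<open>s - 1\<close>.\<close>

definition run :: "nat set \<Rightarrow> nat \<Rightarrow> nat \<Rightarrow> bool" where
  "run A s t \<longleftrightarrow> s \<le> t \<and> {s..t} \<subseteq> A \<and> (\<forall>x. Suc x = s \<longrightarrow> x \<notin> A) \<and> Suc t \<notin> A"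

lemma consecutive_commute: "consecutive a b = consecutive b a"
  unfolding consecutive_def by auto

lemma runD:
  assumes "run A s t"
  shows "s \<le> t" "\<And>x. s \<le> x \<Longrightarrow> x \<le> t \<Longrightarrow> x \<in> A" "\<And>x. Suc x = s \<Longrightarrow> x \<notin> A" "Suc t \<notin> A"
  using assms unfolding run_def by auto

lemma runI:
  assumes "s \<le> t" "\<And>x. s \<le> x \<Longrightarrow> x \<le> t \<Longrightarrow> x \<in> A" "\<And>x. Suc x = s \<Longrightarrow> x \<notin> A" "Suc t \<notin> A"
  shows "run A s t"
  using assms unfolding run_def by auto

lemma run_exists:
  assumes fin: "finite A" and q: "q \<in> A"
  obtains s t where "run A s t" "s \<le> q" "q \<le> t"
proof -
  define s where "s = (LEAST x. {x..q} \<subseteq> A)"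
  have S: "{s..q} \<subseteq> A" unfolding s_def by (rule LeastI[of _ q]) (use q in auto)
  have sq: "s \<le> q" unfolding s_def by (rule Least_le) (use q in auto)
  have left: "x \<notin> A" if "Suc x = s" for x
  proof
    assume "x \<in> A"
    moreover have "{x..q} = insert x {s..q}" using that sq atLeastAtMost_insertL[of x q] by simp
    ultimately have "{x..q} \<subseteq> A" using S by simp
    then have "s \<le> x" unfolding s_def by (rule Least_le)
    then show False using that by simp
  qed
  have bound: "y \<le> Max A" if "{q..y} \<subseteq> A" for y
    using that q fin by (cases "q \<le> y") (auto intro: Max_ge order.trans[OF _ Max_ge[OF fin q]])
  define t where "t = (GREATEST y. {q..y} \<subseteq> A)"
  have T: "{q..t} \<subseteq> A" unfolding t_def by (rule GreatestI_nat[of _ q "Max A"]) (use q bound in auto)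
  have qt: "q \<le> t" unfolding t_def by (rule Greatest_le_nat[of _ q "Max A"]) (use q bound in auto)
  have right: "Suc t \<notin> A"
  proof
    assume "Suc t \<in> A"
    moreover have "{q..Suc t} = insert (Suc t) {q..t}" using qt atLeastAtMostSuc_conv[of q t] by simp
    ultimately have "{q..Suc t} \<subseteq> A" using T by simp
    then have "Suc t \<le> t" unfolding t_def by (rule Greatest_le_nat[where b = "Max A"]) (use bound in auto)
    then show False by simp
  qed
  have "run A s t"
  proof (rule runI)
    show "x \<in> A" if "s \<le> x" "x \<le> t" for x using S T that by (cases "x \<le> q") auto
  qed (use sq qt left right in auto)
  then show ?thesis using that sq qt by blast
qed

lemma run_unique:
  assumes "run A s t" "run A s' t'" "s \<le> x" "x \<le> t" "s' \<le> x" "x \<le> t'"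
  shows "s = s' \<and> t = t'"
proof -
  note r = runD[OF assms(1)] and r' = runD[OF assms(2)]
  have "s = s'"
  proof (rule ccontr)
    assume "s \<noteq> s'"
    then consider "s < s'" | "s' < s" by linarith
    then show False
    proof cases
      case 1 then show False using r(2)[of "s' - 1"] r'(3)[of "s' - 1"] assms by simp
    next
      case 2 then show False using r'(2)[of "s - 1"] r(3)[of "s - 1"] assms by simp
    qed
  qed
  moreover have "t = t'"
  proof (rule ccontr)
    assume "t \<noteq> t'"
    then consider "t < t'" | "t' < t" by linarith
    then show False
    proof cases
      case 1 then show False using r'(2)[of "Suc t"] r(4) assms by simp
    next
      case 2 then show False using r(2)[of "Suc t'"] r'(4) assms by simp
    qed
  qed
  ultimately show ?thesis ..
qed

lemma run_not_consecutive:
  assumes "run A s t" "s \<le> a" "a \<le> t" "b \<in> A" "\<not> (s \<le> b \<and> b \<le> t)"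
  shows "\<not> consecutive a b"
proof
  assume "consecutive a b"
  then consider "b = Suc a" | "a = Suc b" unfolding consecutive_def by blast
  then show False
  proof cases
    case 1
    then have "b = Suc t" using assms by linarith
    then show ?thesis using runD(4)[OF assms(1)] assms(4) by simp
  next
    case 2
    then have "Suc b = s" using assms by linarith
    then show ?thesis using runD(3)[OF assms(1)] assms(4) by blast
  qed
qed

definition linear_embedding ::
  "(nat \<Rightarrow> nat) \<Rightarrow> (nat \<Rightarrow> nat \<Rightarrow> bool) \<Rightarrow> nat set \<Rightarrow> nat set \<Rightarrow> bool" where
  "linear_embedding f R S A \<longleftrightarrow> bij_betw f S A \<and> (\<forall>x\<in>S. \<forall>y\<in>S. R x y \<longleftrightarrow> consecutive (f x) (f y))"

definition has_cycle :: "(nat \<Rightarrow> nat \<Rightarrow> bool) \<Rightarrow> nat set \<Rightarrow> bool" where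
  "has_cycle R S \<longleftrightarrow> (\<exists>k c. 3 \<le> k \<and> inj_on c {0..<k} \<and> c ` {0..<k} \<subseteq> S \<and>
     (\<forall>i<k. R (c i) (c (Suc i mod k))))"

lemma finite_nat_obtain_Suc_bound:
  assumes "finite (A :: nat set)"
  obtains M where "\<forall>a\<in>A. Suc a < M"
proof -
  obtain m where "\<forall>a\<in>A. a < m" using assms finite_nat_set_iff_bounded by blast
  then show ?thesis using that[of "Suc m"] by simp
qed

definition relocate :: "nat \<Rightarrow> nat \<Rightarrow> nat \<Rightarrow> bool \<Rightarrow> nat \<Rightarrow> nat" where
  "relocate s t M rv a = (if s \<le> a \<and> a \<le> t then M + (if rv then t - a else a - s) else a)"

lemma inj_on_relocate:
  assumes "\<forall>a\<in>A. Suc a < M"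
  shows "inj_on (relocate s t M rv) A"
proof (rule inj_onI)
  fix a b assume "a \<in> A" "b \<in> A" "relocate s t M rv a = relocate s t M rv b"
  then show "a = b" using assms unfolding relocate_def by (auto split: if_splits)
qed

lemma image_relocate:
  assumes c: "run A s t" and M: "\<forall>a\<in>A. Suc a < M"
  shows "relocate s t M rv ` A = (A - {s..t}) \<union> {M..M + (t - s)}"
proof
  note cd = runD[OF c]
  show "relocate s t M rv ` A \<subseteq> (A - {s..t}) \<union> {M..M + (t - s)}"
    unfolding relocate_def by (auto split: if_splits)
  show "(A - {s..t}) \<union> {M..M + (t - s)} \<subseteq> relocate s t M rv ` A"
  proof
    fix y assume y: "y \<in> (A - {s..t}) \<union> {M..M + (t - s)}"
    show "y \<in> relocate s t M rv ` A"
    proof (cases "y \<in> {M..M + (t - s)}")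
      case True
      define a where "a = (if rv then t - (y - M) else s + (y - M))"
      have "s \<le> a" "a \<le> t" using True cd(1) unfolding a_def by auto
      moreover have "relocate s t M rv a = y"
        using True cd(1) \<open>s \<le> a\<close> \<open>a \<le> t\<close> unfolding relocate_def a_def by auto
      moreover have "a \<in> A" using cd(2) calculation by blast
      ultimately show ?thesis by blast
    next
      case False
      then have "y \<in> A" "\<not> (s \<le> y \<and> y \<le> t)" using y by auto
      then show ?thesis unfolding relocate_def by force
    qed
  qed
qed

lemma consecutive_relocate:
  assumes c: "run A s t" and M: "\<forall>a\<in>A. Suc a < M" and a: "a \<in> A" and b: "b \<in> A"
  shows "consecutive (relocate s t M rv a) (relocate s t M rv b) \<longleftrightarrow> consecutive a b"
proof -
  have Ma: "Suc a < M" "Suc b < M" using M a b by auto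
  consider "s \<le> a \<and> a \<le> t" "s \<le> b \<and> b \<le> t" | "s \<le> a \<and> a \<le> t" "\<not> (s \<le> b \<and> b \<le> t)"
    | "\<not> (s \<le> a \<and> a \<le> t)" "s \<le> b \<and> b \<le> t" | "\<not> (s \<le> a \<and> a \<le> t)" "\<not> (s \<le> b \<and> b \<le> t)"
    by blast
  then show ?thesis
  proof cases
    case 1 then show ?thesis unfolding relocate_def consecutive_def by auto
  next
    case 2
    then have "\<not> consecutive a b" using run_not_consecutive[OF c _ _ b] by blast
    then show ?thesis using 2 Ma unfolding relocate_def consecutive_def by auto
  next
    case 3
    then have "\<not> consecutive b a" using run_not_consecutive[OF c _ _ a] by blast
    then show ?thesis using 3 Ma consecutive_commute unfolding relocate_def consecutive_def by auto
  next
    case 4 then show ?thesis unfolding relocate_def by auto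
  qed
qed

lemma linear_embedding_insert:
  assumes l: "linear_embedding f R S A" and v: "v \<notin> S" and w: "w \<notin> A"
    and N: "\<forall>y\<in>S. R v y \<longleftrightarrow> consecutive w (f y)" and sym: "\<forall>x y. R x y = R y x" and irr: "\<not> R v v"
  shows "linear_embedding (f(v:=w)) R (insert v S) (insert w A)"
proof -
  have b: "bij_betw f S A" and a: "\<forall>x\<in>S. \<forall>y\<in>S. R x y \<longleftrightarrow> consecutive (f x) (f y)" using l unfolding linear_embedding_def by auto
  have fS: "\<And>x. x \<in> S \<Longrightarrow> (f(v:=w)) x = f x" using v by auto
  have "bij_betw (f(v:=w)) S A" using bij_betw_cong[of S f "f(v:=w)" A] fS b by simp
  then have "bij_betw (f(v:=w)) (S \<union> {v}) (A \<union> {(f(v:=w)) v})"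
    using v w by (intro notIn_Un_bij_betw) auto
  then have bb: "bij_betw (f(v:=w)) (insert v S) (insert w A)" by simp
  have "R x y \<longleftrightarrow> consecutive ((f(v:=w)) x) ((f(v:=w)) y)" if x: "x \<in> insert v S" and y: "y \<in> insert v S" for x y
  proof (cases "x = v")
    case True
    show ?thesis
    proof (cases "y = v")
      case True then show ?thesis using \<open>x = v\<close> irr unfolding consecutive_def by simp
    next
      case False
      then have "y \<in> S" using y by simp
      then show ?thesis using N \<open>x = v\<close> fS by simp
    qed
  next
    case False
    then have xS: "x \<in> S" using x by simp
    show ?thesis
    proof (cases "y = v")
      case True
      have "R x y = R y x" using sym by blast
      also have "\<dots> = consecutive w (f x)" using N xS \<open>y = v\<close> by simp
      also have "\<dots> = consecutive (f x) w" by (rule consecutive_commute)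
      finally show ?thesis using fS[OF xS] \<open>y = v\<close> by simp
    next
      case False
      then have "y \<in> S" using y by simp
      then show ?thesis using a xS fS by simp
    qed
  qed
  then show ?thesis using bb unfolding linear_embedding_def by blast
qed

lemma linear_embedding_comp:
  assumes l: "linear_embedding f R S A" and inj: "inj_on r A"
    and ad: "\<And>a b. a \<in> A \<Longrightarrow> b \<in> A \<Longrightarrow> consecutive (r a) (r b) \<longleftrightarrow> consecutive a b"
  shows "linear_embedding (r \<circ> f) R S (r ` A)"
proof -
  have b: "bij_betw f S A" and a: "\<forall>x\<in>S. \<forall>y\<in>S. R x y \<longleftrightarrow> consecutive (f x) (f y)" using l unfolding linear_embedding_def by auto
  have "bij_betw r A (r ` A)" using inj by (simp add: bij_betw_imageI)
  then have bb: "bij_betw (r \<circ> f) S (r ` A)" using b bij_betw_trans by blast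
  have "R x y \<longleftrightarrow> consecutive ((r \<circ> f) x) ((r \<circ> f) y)" if "x \<in> S" "y \<in> S" for x y
  proof -
    have "f x \<in> A" "f y \<in> A" using b that by (meson bij_betwE)+
    then show ?thesis using a ad that by simp
  qed
  then show ?thesis using bb unfolding linear_embedding_def by blast
qed

lemma linear_embeddingD:
  assumes "linear_embedding f R S A" "x \<in> S"
  shows "f x \<in> A" "y \<in> S \<Longrightarrow> R x y \<longleftrightarrow> consecutive (f x) (f y)"
  using assms unfolding linear_embedding_def by (auto dest: bij_betwE)

lemma linear_embedding_eqD:
  assumes "linear_embedding f R S A" "x \<in> S" "y \<in> S" "f x = f y" shows "x = y"
  using assms unfolding linear_embedding_def bij_betw_def inj_on_def by blast

lemma linear_embedding_surj:
  assumes "linear_embedding f R S A" "a \<in> A" obtains x where "x \<in> S" "f x = a"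
  using assms unfolding linear_embedding_def bij_betw_def by blast

lemma linear_embedding_endpoint:
  assumes l: "linear_embedding f R S A" and p: "p \<in> S" and fin: "finite S" and d: "card {y\<in>S. R p y} \<le> 1"
    and c: "run A s t" and q: "s \<le> f p" "f p \<le> t"
  shows "f p = s \<or> f p = t"
proof (rule ccontr)
  assume "\<not> ?thesis"
  then have lt: "s < f p" "f p < t" using q by auto
  have "Suc (f p) \<in> A" "f p - 1 \<in> A" using runD(2)[OF c] lt by auto
  then obtain y1 y2 where y: "y1 \<in> S" "f y1 = Suc (f p)" "y2 \<in> S" "f y2 = f p - 1"
    using linear_embedding_surj[OF l] by metis
  have "R p y1" "R p y2" using linear_embeddingD(2)[OF l p] y lt unfolding consecutive_def by auto
  moreover have "y1 \<noteq> y2" using y lt by auto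
  ultimately have "{y1, y2} \<subseteq> {y\<in>S. R p y}" using y by auto
  then have "card {y1, y2} \<le> card {y\<in>S. R p y}" using fin by (intro card_mono) auto
  then show False using d \<open>y1 \<noteq> y2\<close> by simp
qed

lemma linear_embedding_move_run:
  fixes top :: bool
  assumes l: "linear_embedding f R S A" and r: "run A s t"
    and M: "\<forall>a\<in>A. Suc a < M" and p: "p \<in> S" "f p = s \<or> f p = t"
  obtains g where "linear_embedding g R S ((A - {s..t}) \<union> {M..M + (t - s)})"
    "g p = (if top then M + (t - s) else M)"
    "\<And>x. \<not> (s \<le> f x \<and> f x \<le> t) \<Longrightarrow> g x = f x"
proof -
  define rv where "rv = (f p \<noteq> (if top then t else s))"
  define r where "r = relocate s t M rv"
  have "linear_embedding (r \<circ> f) R S (r ` A)"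
    unfolding r_def by (rule linear_embedding_comp[OF l inj_on_relocate[OF M] consecutive_relocate[OF r M]])
  then have g: "linear_embedding (r \<circ> f) R S ((A - {s..t}) \<union> {M..M + (t - s)})"
    using image_relocate[OF r M] unfolding r_def by simp
  have gp: "(r \<circ> f) p = (if top then M + (t - s) else M)"
    using p(2) runD(1)[OF r] unfolding r_def rv_def relocate_def by auto
  have "(r \<circ> f) x = f x" if "\<not> (s \<le> f x \<and> f x \<le> t)" for x
    using that unfolding r_def relocate_def by auto
  with g gp show ?thesis by (rule that)
qed

lemma run_relocate_other:
  assumes r: "run A s t" and r': "run A s' t'" and ne: "(s', t') \<noteq> (s, t)"
    and M: "\<forall>a\<in>A. Suc a < M"
  shows "run ((A - {s..t}) \<union> {M..M + d}) s' t'"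
proof (rule runI)
  note c = runD[OF r']
  have disj: "\<not> (s \<le> x \<and> x \<le> t)" if "s' \<le> x" "x \<le> t'" for x
    using run_unique[OF r r' _ _ that] ne by blast
  have tM: "Suc t' < M" using M c(1,2) by blast
  show "s' \<le> t'" by (rule c(1))
  show "x \<in> (A - {s..t}) \<union> {M..M + d}" if "s' \<le> x" "x \<le> t'" for x
    using c(2)[OF that] disj[OF that] by simp
  show "x \<notin> (A - {s..t}) \<union> {M..M + d}" if "Suc x = s'" for x
    using c(1) c(3)[OF that] tM that by simp
  show "Suc t' \<notin> (A - {s..t}) \<union> {M..M + d}"
    using c(4) tM by simp
qed

lemma linear_embedding_insert_isolated:
  assumes l: "linear_embedding f R S A" and finA: "finite A" and v: "v \<notin> S"
    and N: "\<forall>y\<in>S. \<not> R v y" and sym: "\<forall>x y. R x y = R y x" and irr: "\<not> R v v"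
  shows "\<exists>f' A'. linear_embedding f' R (insert v S) A' \<and> finite A'"
proof -
  obtain M where M: "\<forall>a\<in>A. Suc a < M" using finite_nat_obtain_Suc_bound[OF finA] .
  have "\<forall>y\<in>S. R v y \<longleftrightarrow> consecutive M (f y)"
    using N M linear_embeddingD(1)[OF l] unfolding consecutive_def by fastforce
  moreover have "M \<notin> A" using M by auto
  ultimately have "linear_embedding (f(v := M)) R (insert v S) (insert M A)"
    using linear_embedding_insert[OF l v] sym irr by blast
  then show ?thesis using finA by blast
qed

text \<open>A new vertex \<open>v\<close> with a single neighbour \<open>p\<close>: the run of \<open>p\<close> is moved to the top
  with \<open>p\<close> last, and \<open>v\<close> is placed just above it.\<close>

lemma linear_embedding_insert_leaf:
  assumes l: "linear_embedding f R S A" and finA: "finite A" and finS: "finite S"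
    and v: "v \<notin> S" and p: "p \<in> S" and N: "\<forall>y\<in>S. R v y \<longleftrightarrow> y = p"
    and dp: "card {y\<in>S. R p y} \<le> 1" and sym: "\<forall>x y. R x y = R y x" and irr: "\<not> R v v"
  shows "\<exists>f' A'. linear_embedding f' R (insert v S) A' \<and> finite A'"
proof -
  obtain M where M: "\<forall>a\<in>A. Suc a < M" using finite_nat_obtain_Suc_bound[OF finA] .
  obtain s t where r: "run A s t" "s \<le> f p" "f p \<le> t"
    using run_exists[OF finA linear_embeddingD(1)[OF l p]] .
  have e: "f p = s \<or> f p = t" using linear_embedding_endpoint[OF l p finS dp r] .
  let ?A = "(A - {s..t}) \<union> {M..M + (t - s)}"
  obtain g where g: "linear_embedding g R S ?A" "g p = M + (t - s)"
    using linear_embedding_move_run[OF l r(1) M p e, where top = True] by auto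
  have below: "x \<le> M + (t - s)" if "x \<in> ?A" for x
    using that M by auto
  define w where "w = M + (t - s) + 1"
  have "\<forall>y\<in>S. R v y \<longleftrightarrow> consecutive w (g y)"
  proof
    fix y assume y: "y \<in> S"
    show "R v y \<longleftrightarrow> consecutive w (g y)"
    proof (cases "y = p")
      case False
      then have "g y \<noteq> g p" using linear_embedding_eqD[OF g(1) y p] by blast
      then have "g y < M + (t - s)" using below[OF linear_embeddingD(1)[OF g(1) y]] g(2) by simp
      then show ?thesis using N y False unfolding w_def consecutive_def by auto
    qed (use N p g(2) in \<open>simp add: w_def consecutive_def\<close>)
  qed
  moreover have "w \<notin> ?A" using below unfolding w_def by fastforce
  ultimately have "linear_embedding (g(v := w)) R (insert v S) (insert w ?A)"
    using linear_embedding_insert[OF g(1) v] sym irr by blast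
  then show ?thesis using finA by blast
qed

lemma has_cycle_insert_path:
  assumes v: "v \<notin> S" and m: "1 \<le> m" and inj: "inj_on p {0..m}" and img: "p ` {0..m} \<subseteq> S"
    and path: "\<And>i. i < m \<Longrightarrow> R (p i) (p (Suc i))" and first: "R v (p 0)" and last: "R (p m) v"
  shows "has_cycle R (insert v S)"
proof -
  define c where "c = (\<lambda>i. if i = 0 then v else p (i - 1))"
  have pS: "p i \<in> S" if "i \<le> m" for i using img that by auto
  have "inj_on c {0..<m + 2}"
  proof (rule inj_onI)
    fix i j assume i: "i \<in> {0..<m + 2}" and j: "j \<in> {0..<m + 2}" and e: "c i = c j"
    consider "i = 0" "j = 0" | "i = 0" "j \<noteq> 0" | "i \<noteq> 0" "j = 0" | "i \<noteq> 0" "j \<noteq> 0" by blast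
    then show "i = j"
    proof cases
      case 2
      have "j - 1 \<le> m" using j by simp
      then show ?thesis using 2 e pS v unfolding c_def by auto
    next
      case 3
      have "i - 1 \<le> m" using i by simp
      then show ?thesis using 3 e pS v unfolding c_def by auto
    next
      case 4
      then have "p (i - 1) = p (j - 1)" using e unfolding c_def by simp
      then have "i - 1 = j - 1" using inj i j unfolding inj_on_def by auto
      then show ?thesis using 4 by simp
    qed simp
  qed
  moreover have "c ` {0..<m + 2} \<subseteq> insert v S" using pS unfolding c_def by auto
  moreover have "R (c i) (c (Suc i mod (m + 2)))" if i: "i < m + 2" for i
  proof -
    consider "i = 0" | "0 < i" "i < m + 1" | "i = m + 1" using i by linarith
    then show ?thesis
    proof cases
      case 1 then show ?thesis using first m unfolding c_def by simp
    next
      case 2 then show ?thesis using path[of "i - 1"] unfolding c_def by simp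
    next
      case 3 then show ?thesis using last unfolding c_def by simp
    qed
  qed
  ultimately show ?thesis using m unfolding has_cycle_def by (intro exI[of _ "m + 2"] exI[of _ c]) auto
qed

lemma linear_embedding_cycle:
  assumes l: "linear_embedding f R S A" and v: "v \<notin> S" and c: "run A s t" and st: "s < t"
    and ps: "ps \<in> S" "f ps = s" "R v ps" and pt: "pt \<in> S" "f pt = t" "R v pt"
    and sym: "\<forall>x y. R x y = R y x"
  shows "has_cycle R (insert v S)"
proof -
  have b: "bij_betw f S A" using l unfolding linear_embedding_def by blast
  then have fS: "f ` S = A" and injf: "inj_on f S" unfolding bij_betw_def by auto
  define p where "p = (\<lambda>i. inv_into S f (s + i))"
  have A: "s + i \<in> A" if "i \<le> t - s" for i using runD(1,2)[OF c] that by auto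
  have pS: "p i \<in> S" and fp: "f (p i) = s + i" if "i \<le> t - s" for i
    using A[OF that] fS unfolding p_def by (auto intro: inv_into_into f_inv_into_f)
  have "inj_on p {0..t - s}"
  proof (rule inj_onI)
    fix i j assume "i \<in> {0..t - s}" "j \<in> {0..t - s}" "p i = p j"
    then show "i = j" using fp by (metis atLeastAtMost_iff add_left_cancel)
  qed
  moreover have "p ` {0..t - s} \<subseteq> S" using pS by auto
  moreover have "R (p i) (p (Suc i))" if "i < t - s" for i
    using linear_embeddingD(2)[OF l pS pS] fp that unfolding consecutive_def by simp
  moreover have "p 0 = ps" "p (t - s) = pt"
    using ps pt st injf unfolding p_def by (auto simp: inv_into_f_f)
  ultimately show ?thesis
    using has_cycle_insert_path[OF v, of "t - s" p R] st ps(3) pt(3) sym by auto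
qed

text \<open>A new vertex \<open>v\<close> with two neighbours: if they end the same run, \<open>v\<close> closes a
  cycle; otherwise the two runs are moved to the top so that they are joined through \<open>v\<close>.\<close>

lemma linear_embedding_insert_two:
  assumes l: "linear_embedding f R S A" and finA: "finite A" and finS: "finite S" and v: "v \<notin> S"
    and p1: "p1 \<in> S" and p2: "p2 \<in> S" and ne: "p1 \<noteq> p2"
    and N: "\<forall>y\<in>S. R v y \<longleftrightarrow> y = p1 \<or> y = p2"
    and d1: "card {y\<in>S. R p1 y} \<le> 1" and d2: "card {y\<in>S. R p2 y} \<le> 1"
    and sym: "\<forall>x y. R x y = R y x" and irr: "\<not> R v v"
  shows "has_cycle R (insert v S) \<or> (\<exists>f' A'. linear_embedding f' R (insert v S) A' \<and> finite A')"
proof -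
  obtain s1 t1 where r1: "run A s1 t1" "s1 \<le> f p1" "f p1 \<le> t1"
    using run_exists[OF finA linear_embeddingD(1)[OF l p1]] .
  obtain s2 t2 where r2: "run A s2 t2" "s2 \<le> f p2" "f p2 \<le> t2"
    using run_exists[OF finA linear_embeddingD(1)[OF l p2]] .
  have e1: "f p1 = s1 \<or> f p1 = t1" using linear_embedding_endpoint[OF l p1 finS d1 r1] .
  have e2: "f p2 = s2 \<or> f p2 = t2" using linear_embedding_endpoint[OF l p2 finS d2 r2] .
  have fne: "f p1 \<noteq> f p2" using linear_embedding_eqD[OF l p1 p2] ne by blast
  have Rv: "R v p1" "R v p2" using N p1 p2 by auto
  show ?thesis
  proof (cases "(s2, t2) = (s1, t1)")
    case True
    then have st: "s1 < t1" using e1 e2 fne r1 r2 by auto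
    have "f p1 = s1 \<and> f p2 = t1 \<or> f p2 = s1 \<and> f p1 = t1" using True e1 e2 fne by auto
    then have "has_cycle R (insert v S)"
      using linear_embedding_cycle[OF l v r1(1) st] p1 p2 Rv sym by blast
    then show ?thesis ..
  next
    case False
    obtain M where M: "\<forall>a\<in>A. Suc a < M" using finite_nat_obtain_Suc_bound[OF finA] .
    let ?A1 = "(A - {s1..t1}) \<union> {M..M + (t1 - s1)}"
    obtain g1 where g1: "linear_embedding g1 R S ?A1" "g1 p1 = M + (t1 - s1)"
      and g1f: "\<And>x. \<not> (s1 \<le> f x \<and> f x \<le> t1) \<Longrightarrow> g1 x = f x"
      using linear_embedding_move_run[OF l r1(1) M p1 e1, where top = True] by auto
    have out: "\<not> (s1 \<le> f p2 \<and> f p2 \<le> t1)" using run_unique[OF r1(1) r2(1)] r2 False by blast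
    have r2': "run ?A1 s2 t2" using run_relocate_other[OF r1(1) r2(1) False M] .
    define M2 where "M2 = M + (t1 - s1) + 2"
    have M2: "\<forall>a\<in>?A1. Suc a < M2" using M unfolding M2_def by auto
    let ?A2 = "(?A1 - {s2..t2}) \<union> {M2..M2 + (t2 - s2)}"
    obtain g2 where g2: "linear_embedding g2 R S ?A2" "g2 p2 = M2"
      and g2g: "\<And>x. \<not> (s2 \<le> g1 x \<and> g1 x \<le> t2) \<Longrightarrow> g2 x = g1 x"
      using linear_embedding_move_run[OF g1(1) r2' M2 p2, where top = False] e2 g1f[OF out] by metis
    have "t2 \<in> A" using runD(1,2)[OF r2(1)] by blast
    then have "g2 p1 = M + (t1 - s1)" using g2g[of p1] g1(2) M by fastforce
    define w where "w = M + (t1 - s1) + 1"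
    have "\<forall>y\<in>S. R v y \<longleftrightarrow> consecutive w (g2 y)"
    proof
      fix y assume y: "y \<in> S"
      show "R v y \<longleftrightarrow> consecutive w (g2 y)"
      proof (cases "y = p1 \<or> y = p2")
        case False
        have "g2 y \<noteq> g2 p1" "g2 y \<noteq> g2 p2" using linear_embedding_eqD[OF g2(1) y] p1 p2 False by blast+
        moreover have "g2 y \<in> ?A2" using linear_embeddingD(1)[OF g2(1) y] .
        ultimately have "\<not> consecutive w (g2 y)"
          using M \<open>g2 p1 = M + (t1 - s1)\<close> g2(2) unfolding w_def M2_def consecutive_def by auto
        then show ?thesis using N y False by simp
      qed (use Rv \<open>g2 p1 = M + (t1 - s1)\<close> g2(2) in \<open>auto simp: w_def M2_def consecutive_def\<close>)
    qed
    moreover have "w \<notin> ?A2" using M unfolding w_def M2_def by auto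
    ultimately have "linear_embedding (g2(v := w)) R (insert v S) (insert w ?A2)"
      using linear_embedding_insert[OF g2(1) v] sym irr by blast
    then show ?thesis using finA by blast
  qed
qed

lemma linear_embedding_insert_vertex:
  assumes l: "linear_embedding f R S A" and finA: "finite A" and finS: "finite S" and v: "v \<notin> S"
    and sym: "\<forall>x y. R x y = R y x" and irr: "\<not> R v v"
    and dv: "card {y\<in>S. R v y} \<le> 2" and dp: "\<And>p. p \<in> S \<Longrightarrow> R v p \<Longrightarrow> card {y\<in>S. R p y} \<le> 1"
  shows "has_cycle R (insert v S) \<or> (\<exists>f' A'. linear_embedding f' R (insert v S) A' \<and> finite A')"
proof -
  define Nv where "Nv = {y\<in>S. R v y}"
  have finN: "finite Nv" unfolding Nv_def using finS by simp
  consider "card Nv = 0" | "card Nv = 1" | "card Nv = 2" using dv unfolding Nv_def by linarith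
  then show ?thesis
  proof cases
    case 1
    then have "\<forall>y\<in>S. \<not> R v y" using finN unfolding Nv_def by simp
    from linear_embedding_insert_isolated[OF l finA v this sym irr] show ?thesis ..
  next
    case 2
    then obtain p where p: "Nv = {p}" by (rule card_1_singletonE)
    then have pS: "p \<in> S" and N: "\<forall>y\<in>S. R v y \<longleftrightarrow> y = p" unfolding Nv_def by blast+
    have "card {y\<in>S. R p y} \<le> 1" using dp pS N by simp
    from linear_embedding_insert_leaf[OF l finA finS v pS N this sym irr] show ?thesis ..
  next
    case 3
    then obtain p1 p2 where p: "Nv = {p1, p2}" and ne: "p1 \<noteq> p2" by (meson card_2_iff)
    then have pS: "p1 \<in> S" "p2 \<in> S" and N: "\<forall>y\<in>S. R v y \<longleftrightarrow> y = p1 \<or> y = p2"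
      unfolding Nv_def by blast+
    have "card {y\<in>S. R p1 y} \<le> 1" "card {y\<in>S. R p2 y} \<le> 1" using dp pS N by simp_all
    from linear_embedding_insert_two[OF l finA finS v pS ne N this sym irr] show ?thesis .
  qed
qed

theorem max_degree_two_imp_cycle_or_linear:
  assumes fin: "finite S" and sym: "\<forall>x y. R x y = R y x" and irr: "\<forall>x. \<not> R x x"
    and deg: "\<forall>x\<in>S. card {y\<in>S. R x y} \<le> 2"
  shows "has_cycle R S \<or> (\<exists>f A. linear_embedding f R S A \<and> finite A)"
  using fin deg
proof (induction S rule: finite_induct)
  case empty
  have "linear_embedding id R {} {}" unfolding linear_embedding_def by simp
  then show ?case by blast
next
  case (insert v S)
  have step: "card {y\<in>insert v S. R x y} = card {y\<in>S. R x y} + (if R x v then 1 else 0)" for x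
  proof -
    have "{y\<in>insert v S. R x y} = (if R x v then insert v {y\<in>S. R x y} else {y\<in>S. R x y})" by auto
    then show ?thesis using insert.hyps by simp
  qed
  have deg: "card {y\<in>S. R x y} + (if R x v then 1 else 0) \<le> 2" if "x \<in> insert v S" for x
  proof -
    have "card {y\<in>insert v S. R x y} \<le> 2" using insert.prems that by blast
    then show ?thesis by (simp only: step)
  qed
  have "card {y\<in>S. R x y} \<le> 2" if "x \<in> S" for x
    using deg[of x] that by (simp split: if_splits)
  with insert.IH consider "has_cycle R S" | f A where "linear_embedding f R S A" "finite A" by blast
  then show ?case
  proof cases
    case 1
    then have "has_cycle R (insert v S)" unfolding has_cycle_def by blast
    then show ?thesis ..
  next
    case 2
    have irv: "\<not> R v v" using irr by blast
    have dv: "card {y\<in>S. R v y} \<le> 2" using deg[of v] irv by simp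
    have dp: "card {y\<in>S. R p y} \<le> 1" if "p \<in> S" "R v p" for p
      using deg[of p] that sym by simp
    show ?thesis by (rule linear_embedding_insert_vertex[OF 2 insert.hyps(1,2) sym irv dv dp])
  qed
qed

section \<open>Linear forests\<close>

definition linear_forest :: "nat set \<Rightarrow> graph" where
  "linear_forest A = (A, {{a, Suc a} | a. a \<in> A \<and> Suc a \<in> A})"

definition run_ends :: "nat set \<Rightarrow> nat set" where
  "run_ends A = {a\<in>A. Suc a \<notin> A}"

definition edge_starts :: "nat set \<Rightarrow> nat set" where
  "edge_starts A = {a\<in>A. Suc a \<in> A}"

text \<open>A linear forest has a full colouring into a path with
  \<open>forest_weight A - 1\<close> vertices (its runs laid out with a one-vertex gap after each), and under
  the density condition below no full colouring does better.\<close>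

definition forest_weight :: "nat set \<Rightarrow> nat" where
  "forest_weight A = card A + card (run_ends A)"

definition edge_density_bound :: "graph \<Rightarrow> nat \<Rightarrow> bool" where
  "edge_density_bound H N \<longleftrightarrow> (\<forall>S \<subseteq> verts H. 2 * card S \<le> N + card {e \<in> edges H. e \<subseteq> S})"

definition induced_path_prefix :: "graph \<Rightarrow> nat \<Rightarrow> bool" where
  "induced_path_prefix H N \<longleftrightarrow>
     (\<forall>x y. x + 1 < N \<longrightarrow> y + 1 < N \<longrightarrow> x \<in> verts H \<and> (adj H x y \<longleftrightarrow> consecutive x y))"

lemma verts_linear_forest[simp]: "verts (linear_forest A) = A" by (simp add: linear_forest_def verts_def)

lemma adj_linear_forest: "adj (linear_forest A) x y \<longleftrightarrow> x \<in> A \<and> y \<in> A \<and> consecutive x y"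
proof
  assume "adj (linear_forest A) x y"
  then obtain a where "{x, y} = {a, Suc a}" "a \<in> A" "Suc a \<in> A"
    unfolding adj_def linear_forest_def edges_def by auto
  then show "x \<in> A \<and> y \<in> A \<and> consecutive x y" unfolding consecutive_def by (auto simp: doubleton_eq_iff)
next
  assume a: "x \<in> A \<and> y \<in> A \<and> consecutive x y"
  then consider "y = Suc x" | "x = Suc y" unfolding consecutive_def by blast
  then show "adj (linear_forest A) x y"
  proof cases
    case 1 then show ?thesis using a unfolding adj_def linear_forest_def edges_def by auto
  next
    case 2 then have "{x, y} = {y, Suc y}" by auto
    then show ?thesis using a 2 unfolding adj_def linear_forest_def edges_def by auto
  qed
qed

lemma wf_graph_linear_forest: assumes "finite A" shows "wf_graph (linear_forest A)"
proof -
  have "\<exists>x y. x \<noteq> y \<and> x \<in> A \<and> y \<in> A \<and> e = {x, y}" if ee: "e \<in> {{a, Suc a} | a. a \<in> A \<and> Suc a \<in> A}" for e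
  proof -
    obtain a where "e = {a, Suc a}" "a \<in> A" "Suc a \<in> A" using ee by blast
    then show ?thesis by (intro exI[of _ a] exI[of _ "Suc a"]) simp
  qed
  then show ?thesis unfolding wf_graph_def using assms by (simp add: linear_forest_def verts_def edges_def)
qed

lemma induced_linear_forest: assumes "B \<subseteq> A" shows "induced (linear_forest A) B = linear_forest B"
proof -
  have "{e \<in> {{a, Suc a} | a. a \<in> A \<and> Suc a \<in> A}. e \<subseteq> B} = {{a, Suc a} | a. a \<in> B \<and> Suc a \<in> B}"
    using assms by auto
  then show ?thesis unfolding induced_def linear_forest_def edges_def by simp
qed

lemma card_edge_starts_run_ends: assumes "finite A" shows "card A = card (edge_starts A) + card (run_ends A)"
proof -
  have "A = edge_starts A \<union> run_ends A" "edge_starts A \<inter> run_ends A = {}" unfolding edge_starts_def run_ends_def by auto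
  moreover have "finite (edge_starts A)" "finite (run_ends A)" using assms unfolding edge_starts_def run_ends_def by auto
  ultimately show ?thesis by (metis card_Un_disjoint)
qed

lemma edges_linear_forest_subset:
  assumes "S \<subseteq> B"
  shows "{e \<in> edges (linear_forest B). e \<subseteq> S} = (\<lambda>a. {a, Suc a}) ` edge_starts S"
  using assms unfolding linear_forest_def edges_def edge_starts_def by auto

lemma card_edge_starts_image: "card ((\<lambda>a. {a, Suc a}) ` edge_starts S) = card (edge_starts S)"
  by (rule card_image) (auto simp: inj_on_def doubleton_eq_iff)

lemma card_edges_linear_forest: "card (edges (linear_forest B)) = card (edge_starts B)"
proof -
  have "edges (linear_forest B) = (\<lambda>a. {a, Suc a}) ` edge_starts B"
    unfolding linear_forest_def edges_def edge_starts_def by auto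
  then show ?thesis using card_edge_starts_image by simp
qed

lemma card_edges_full_hom_image:
  assumes wfG: "wf_graph G" and wfH: "wf_graph H" and phi: "full_hom \<phi> G H"
    and inj: "inj_on \<phi> (verts G)"
  shows "card {e \<in> edges H. e \<subseteq> \<phi> ` verts G} = card (edges G)"
proof -
  have A: "\<And>x y. x \<in> verts G \<Longrightarrow> y \<in> verts G \<Longrightarrow> adj G x y = adj H (\<phi> x) (\<phi> y)"
    using phi unfolding full_hom_def by blast
  have EG: "\<exists>x y. x \<in> verts G \<and> y \<in> verts G \<and> e = {x, y}" if "e \<in> edges G" for e
    using wfG that unfolding wf_graph_def by blast
  have "(\<lambda>e. \<phi> ` e) ` edges G = {e \<in> edges H. e \<subseteq> \<phi> ` verts G}"
  proof (intro equalityI subsetI)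
    fix e' assume "e' \<in> (\<lambda>e. \<phi> ` e) ` edges G"
    then obtain e where e: "e \<in> edges G" "e' = \<phi> ` e" by blast
    then obtain x y where xy: "x \<in> verts G" "y \<in> verts G" "e = {x, y}" using EG by blast
    then have "adj H (\<phi> x) (\<phi> y)" using A[OF xy(1,2)] e(1) unfolding adj_def by simp
    then show "e' \<in> {e \<in> edges H. e \<subseteq> \<phi> ` verts G}" using e xy unfolding adj_def by simp
  next
    fix e' assume e': "e' \<in> {e \<in> edges H. e \<subseteq> \<phi> ` verts G}"
    then have "e' \<in> edges H" by simp
    then obtain a b where ab: "e' = {a, b}" using wfH unfolding wf_graph_def by blast
    then have "a \<in> \<phi> ` verts G" "b \<in> \<phi> ` verts G" using e' by auto
    then obtain x y where x: "x \<in> verts G" "a = \<phi> x" and y: "y \<in> verts G" "b = \<phi> y" by blast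
    then have "{x, y} \<in> edges G" using e' ab A[OF x(1) y(1)] unfolding adj_def by simp
    moreover have "e' = \<phi> ` {x, y}" using ab x y by simp
    ultimately show "e' \<in> (\<lambda>e. \<phi> ` e) ` edges G" by blast
  qed
  moreover have "inj_on (\<lambda>e. \<phi> ` e) (edges G)"
  proof (rule inj_on_subset[OF inj_on_image_Pow[OF inj]])
    show "edges G \<subseteq> Pow (verts G)" using EG by blast
  qed
  then have "card ((\<lambda>e. \<phi> ` e) ` edges G) = card (edges G)" by (rule card_image)
  ultimately show ?thesis by simp
qed

lemma full_hom_linear_forest_weight_le:
  assumes wfH: "wf_graph H" and density: "edge_density_bound H N"
    and fin: "finite B" and phi: "full_hom \<phi> (linear_forest B) H" and pd: "point_determining (linear_forest B)"
  shows "forest_weight B \<le> N"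
proof -
  have inj: "inj_on \<phi> B" using full_hom_inj_on[OF phi wfH pd] by simp
  have "\<phi> ` B \<subseteq> verts H" using phi unfolding full_hom_def by auto
  then have "2 * card (\<phi> ` B) \<le> N + card {e \<in> edges H. e \<subseteq> \<phi> ` B}"
    using density unfolding edge_density_bound_def by blast
  moreover have "card {e \<in> edges H. e \<subseteq> \<phi> ` B} = card (edge_starts B)"
    using card_edges_full_hom_image[OF wf_graph_linear_forest[OF fin] wfH phi] inj card_edges_linear_forest
    by simp
  moreover have "card (\<phi> ` B) = card B" using card_image[OF inj] .
  ultimately show ?thesis using card_edge_starts_run_ends[OF fin] unfolding forest_weight_def by linarith
qed

definition compress :: "nat set \<Rightarrow> nat \<Rightarrow> nat" where
  "compress A a = card {b\<in>A. b < a} + card {b\<in>run_ends A. b < a}"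

lemma compress_Suc:
  assumes fin: "finite A" and a: "a \<in> A" "Suc a \<in> A"
  shows "compress A (Suc a) = Suc (compress A a)"
proof -
  have "{b\<in>A. b < Suc a} = insert a {b\<in>A. b < a}" using a by auto
  then have "card {b\<in>A. b < Suc a} = Suc (card {b\<in>A. b < a})" using fin by simp
  moreover have "{b\<in>run_ends A. b < Suc a} = {b\<in>run_ends A. b < a}" using a unfolding run_ends_def by (auto simp: less_Suc_eq)
  ultimately show ?thesis unfolding compress_def by simp
qed

lemma compress_gap:
  assumes fin: "finite A" and a: "a \<in> A" and b: "b \<in> A" and ab: "a < b" "b \<noteq> Suc a"
  shows "compress A a + 2 \<le> compress A b"
proof -
  have fe: "finite (run_ends A)" using fin unfolding run_ends_def by simp
  show ?thesis
  proof (cases "Suc a \<in> A")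
    case True
    have "insert a (insert (Suc a) {x\<in>A. x < a}) \<subseteq> {x\<in>A. x < b}" using a True ab by auto
    then have "card (insert a (insert (Suc a) {x\<in>A. x < a})) \<le> card {x\<in>A. x < b}"
      using fin by (intro card_mono) auto
    then have 1: "card {x\<in>A. x < a} + 2 \<le> card {x\<in>A. x < b}" using fin by simp
    have "{x\<in>run_ends A. x < a} \<subseteq> {x\<in>run_ends A. x < b}" using ab by auto
    then have 2: "card {x\<in>run_ends A. x < a} \<le> card {x\<in>run_ends A. x < b}" using fe by (intro card_mono) auto
    show ?thesis using 1 2 unfolding compress_def by linarith
  next
    case False
    have "insert a {x\<in>A. x < a} \<subseteq> {x\<in>A. x < b}" using a ab by auto
    then have "card (insert a {x\<in>A. x < a}) \<le> card {x\<in>A. x < b}" using fin by (intro card_mono) auto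
    then have 1: "card {x\<in>A. x < a} + 1 \<le> card {x\<in>A. x < b}" using fin by simp
    have "insert a {x\<in>run_ends A. x < a} \<subseteq> {x\<in>run_ends A. x < b}" using a ab False unfolding run_ends_def by auto
    then have "card (insert a {x\<in>run_ends A. x < a}) \<le> card {x\<in>run_ends A. x < b}" using fe by (intro card_mono) auto
    then have 2: "card {x\<in>run_ends A. x < a} + 1 \<le> card {x\<in>run_ends A. x < b}" using fe by simp
    show ?thesis using 1 2 unfolding compress_def by linarith
  qed
qed

lemma compress_bound:
  assumes fin: "finite A" and a: "a \<in> A"
  shows "compress A a + 2 \<le> forest_weight A"
proof -
  have fe: "finite (run_ends A)" using fin unfolding run_ends_def by simp
  have ne: "A \<noteq> {}" using a by auto
  define m where "m = Max A"
  have mA: "m \<in> A" unfolding m_def using fin ne by simp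
  have "Suc m \<notin> A"
  proof
    assume "Suc m \<in> A" then have "Suc m \<le> m" unfolding m_def using fin by simp
    then show False by simp
  qed
  then have me: "m \<in> run_ends A" unfolding run_ends_def using mA by simp
  have am: "a \<le> m" unfolding m_def using fin a by simp
  have "{b\<in>A. b < a} \<subseteq> A - {a}" by auto
  then have "card {b\<in>A. b < a} \<le> card (A - {a})" using fin by (intro card_mono) auto
  moreover have "card (A - {a}) = card A - 1" using a fin by (simp add: card_Diff_singleton)
  moreover have "card A \<ge> 1" using a fin by (metis One_nat_def Suc_leI card_gt_0_iff empty_iff)
  ultimately have 1: "card {b\<in>A. b < a} + 1 \<le> card A" by linarith
  have "{b\<in>run_ends A. b < a} \<subseteq> run_ends A - {m}" using am by auto
  then have "card {b\<in>run_ends A. b < a} \<le> card (run_ends A - {m})" using fe by (intro card_mono) auto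
  moreover have "card (run_ends A - {m}) = card (run_ends A) - 1" using me fe by (simp add: card_Diff_singleton)
  moreover have "card (run_ends A) \<ge> 1" using me fe by (metis One_nat_def Suc_leI card_gt_0_iff empty_iff)
  ultimately have 2: "card {b\<in>run_ends A. b < a} + 1 \<le> card (run_ends A)" by linarith
  show ?thesis using 1 2 unfolding compress_def forest_weight_def by linarith
qed

lemma compress_consecutive:
  assumes fin: "finite A" and a: "a \<in> A" and b: "b \<in> A"
  shows "consecutive a b \<longleftrightarrow> consecutive (compress A a) (compress A b)"
proof -
  consider "a < b" | "a = b" | "b < a" by linarith
  then show ?thesis
  proof cases
    case 1
    show ?thesis
    proof (cases "b = Suc a")
      case True then show ?thesis using compress_Suc[OF fin a] b unfolding consecutive_def by simp
    next
      case False
      have "compress A a + 2 \<le> compress A b" using compress_gap[OF fin a b 1 False] .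
      then show ?thesis using 1 False unfolding consecutive_def by auto
    qed
  next
    case 2 then show ?thesis unfolding consecutive_def by simp
  next
    case 3
    show ?thesis
    proof (cases "a = Suc b")
      case True then show ?thesis using compress_Suc[OF fin b] a unfolding consecutive_def by simp
    next
      case False
      have "compress A b + 2 \<le> compress A a" using compress_gap[OF fin b a 3 False] .
      then show ?thesis using 3 False unfolding consecutive_def by auto
    qed
  qed
qed

lemma full_colourable_linear_forest:
  assumes fin: "finite A"
    and prefix: "induced_path_prefix H N"
    and m: "forest_weight A \<le> N"
  shows "full_colourable (linear_forest A) H"
proof -
  have lt: "compress A a + 1 < N" if "a \<in> A" for a using compress_bound[OF fin that] m by linarith
  have "full_hom (compress A) (linear_forest A) H"
    unfolding full_hom_def
  proof (intro conjI ballI)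
    fix x assume "x \<in> verts (linear_forest A)"
    then have "compress A x + 1 < N" using lt by simp
    then show "compress A x \<in> verts H" using prefix unfolding induced_path_prefix_def by blast
  next
    fix x y assume x: "x \<in> verts (linear_forest A)" and y: "y \<in> verts (linear_forest A)"
    have "adj (linear_forest A) x y \<longleftrightarrow> consecutive x y" using x y by (simp add: adj_linear_forest)
    also have "\<dots> \<longleftrightarrow> consecutive (compress A x) (compress A y)" using compress_consecutive[OF fin] x y by simp
    also have "\<dots> \<longleftrightarrow> adj H (compress A x) (compress A y)"
      using prefix lt x y unfolding induced_path_prefix_def by simp
    finally show "adj (linear_forest A) x y = adj H (compress A x) (compress A y)" .
  qed
  then show ?thesis unfolding full_colourable_def by blast
qed

lemma linear_forest_twins:
  assumes x: "x \<in> B" and y: "y \<in> B" and xy: "x < y" and nl: "\<not> consecutive x y"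
    and tw: "\<forall>z\<in>B. consecutive x z = consecutive y z"
  shows "run B x (Suc (Suc x)) \<or> (run B x x \<and> run B y y)"
proof -
  have nb: "consecutive x z \<longleftrightarrow> consecutive y z" if "z \<in> B" for z using tw that by blast
  have left: "z \<notin> B" if "Suc z = x" for z using nb[of z] that xy unfolding consecutive_def by auto
  have right: "Suc y \<notin> B" using nb[of "Suc y"] xy unfolding consecutive_def by auto
  show ?thesis
  proof (cases "Suc x \<in> B")
    case True
    then have "y = Suc (Suc x)" using nb[of "Suc x"] xy nl unfolding consecutive_def by auto
    then have "run B x (Suc (Suc x))"
      using x y True left right by (intro runI) (auto simp: le_Suc_eq)
    then show ?thesis ..
  next
    case False
    have "z \<notin> B" if "Suc z = y" for z using nb[of z] that False xy unfolding consecutive_def by auto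
    then have "run B x x" "run B y y" using x y False left right by (auto intro: runI)
    then show ?thesis by blast
  qed
qed

lemma point_determining_linear_forestI:
  assumes iso1: "\<forall>a b. run B a a \<longrightarrow> run B b b \<longrightarrow> a = b"
    and no3: "\<forall>s. \<not> run B s (Suc (Suc s))"
  shows "point_determining (linear_forest B)"
  unfolding point_determining_def
proof (intro ballI impI)
  fix x y assume x: "x \<in> verts (linear_forest B)" and y: "y \<in> verts (linear_forest B)" and ne: "x \<noteq> y"
    and na: "\<not> adj (linear_forest B) x y"
  show "\<exists>z\<in>verts (linear_forest B). adj (linear_forest B) x z \<noteq> adj (linear_forest B) y z"
  proof (rule ccontr)
    assume "\<not> ?thesis"
    then have tw0: "\<forall>z\<in>B. adj (linear_forest B) x z = adj (linear_forest B) y z" by simp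
    have xB: "x \<in> B" and yB: "y \<in> B" using x y by auto
    have tw: "\<forall>z\<in>B. consecutive x z = consecutive y z" using tw0 xB yB by (simp add: adj_linear_forest)
    have nl: "\<not> consecutive x y" using na xB yB by (simp add: adj_linear_forest)
    consider "x < y" | "y < x" using ne by linarith
    then show False
    proof cases
      case 1
      from linear_forest_twins[OF xB yB 1 nl tw] show False using iso1 no3 ne by blast
    next
      case 2
      have "\<not> consecutive y x" "\<forall>z\<in>B. consecutive y z = consecutive x z"
        using nl tw consecutive_commute by auto
      from linear_forest_twins[OF yB xB 2 this] show False using iso1 no3 ne by blast
    qed
  qed
qed

lemma point_determining_linear_forest_isolated:
  assumes pd: "point_determining (linear_forest B)" and a: "run B a a" and b: "run B b b"
  shows "a = b"
proof (rule ccontr)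
  assume ne: "a \<noteq> b"
  have aB: "a \<in> B" and bB: "b \<in> B" using runD(2)[OF a] runD(2)[OF b] by auto
  have nla: "\<not> consecutive a z" if "z \<in> B" for z
    using that runD(3)[OF a] runD(4)[OF a] unfolding consecutive_def by auto
  have nlb: "\<not> consecutive b z" if "z \<in> B" for z
    using that runD(3)[OF b] runD(4)[OF b] unfolding consecutive_def by auto
  have "\<not> adj (linear_forest B) a b" using nla bB by (simp add: adj_linear_forest)
  then obtain z where "z \<in> B" "adj (linear_forest B) a z \<noteq> adj (linear_forest B) b z"
    using pd aB bB ne unfolding point_determining_def by auto
  then show False using nla nlb by (simp add: adj_linear_forest)
qed

lemma point_determining_linear_forest_no_run3:
  assumes pd: "point_determining (linear_forest B)" and c: "run B s (Suc (Suc s))"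
  shows False
proof -
  note cd = runD[OF c]
  have sB: "s \<in> B" and s2B: "Suc (Suc s) \<in> B" using cd(2) by auto
  have "\<not> adj (linear_forest B) s (Suc (Suc s))" by (simp add: adj_linear_forest consecutive_def)
  moreover have P: "\<forall>x\<in>B. \<forall>y\<in>B. x \<noteq> y \<longrightarrow> \<not> adj (linear_forest B) x y \<longrightarrow> (\<exists>z\<in>B. adj (linear_forest B) x z \<noteq> adj (linear_forest B) y z)"
    using pd unfolding point_determining_def by simp
  moreover have "s \<noteq> Suc (Suc s)" by simp
  ultimately obtain z where z: "z \<in> B" "adj (linear_forest B) s z \<noteq> adj (linear_forest B) (Suc (Suc s)) z"
    using sB s2B by blast
  then have "consecutive s z \<noteq> consecutive (Suc (Suc s)) z" using sB s2B by (simp add: adj_linear_forest)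
  then consider "z = Suc s" | "Suc z = s" | "z = Suc (Suc (Suc s))" unfolding consecutive_def by auto
  then show False
  proof cases
    case 1 then show False using z sB s2B by (simp add: adj_linear_forest consecutive_def)
  next
    case 2 then show False using cd(3) z(1) by blast
  next
    case 3 then show False using cd(4) z(1) by simp
  qed
qed

lemma point_determining_linear_forest_iff:
  "point_determining (linear_forest B) \<longleftrightarrow>
     (\<forall>a b. run B a a \<longrightarrow> run B b b \<longrightarrow> a = b) \<and> (\<forall>s. \<not> run B s (Suc (Suc s)))"
proof
  assume "point_determining (linear_forest B)"
  then show "(\<forall>a b. run B a a \<longrightarrow> run B b b \<longrightarrow> a = b) \<and> (\<forall>s. \<not> run B s (Suc (Suc s)))"
    using point_determining_linear_forest_isolated point_determining_linear_forest_no_run3 by blast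
qed (use point_determining_linear_forestI in blast)

lemma run_ends_Diff_singleton:
  assumes "v \<in> A"
  shows "run_ends (A - {v}) = (run_ends A - {v}) \<union> {x. Suc x = v \<and> x \<in> A}"
  using assms unfolding run_ends_def by auto

lemma forest_weight_Diff_inner:
  assumes fin: "finite A" and v: "v \<in> A" "Suc v \<in> A" and u: "u \<in> A" "Suc u = v"
  shows "forest_weight (A - {v}) = forest_weight A"
proof -
  have fe: "finite (run_ends A)" using fin unfolding run_ends_def by simp
  have "run_ends (A - {v}) = insert u (run_ends A)"
    using run_ends_Diff_singleton[OF v(1)] v u unfolding run_ends_def by auto
  moreover have "u \<notin> run_ends A" using u v unfolding run_ends_def by auto
  ultimately have "card (run_ends (A - {v})) = Suc (card (run_ends A))" using fe by simp
  moreover have "card (A - {v}) = card A - 1" using v fin by (simp add: card_Diff_singleton)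
  moreover have "card A \<ge> 1" using v fin by (metis One_nat_def Suc_leI card_gt_0_iff empty_iff)
  ultimately show ?thesis unfolding forest_weight_def by linarith
qed

lemma forest_weight_Diff_isolated:
  assumes fin: "finite A" and c: "run A p p"
  shows "forest_weight (A - {p}) + 2 = forest_weight A"
proof -
  note cd = runD[OF c]
  have pA: "p \<in> A" using cd(2) by simp
  have fe: "finite (run_ends A)" using fin unfolding run_ends_def by simp
  have "run_ends (A - {p}) = run_ends A - {p}"
    using run_ends_Diff_singleton[OF pA] cd(3) by auto
  moreover have "p \<in> run_ends A" using pA cd(4) unfolding run_ends_def by simp
  ultimately have "card (run_ends (A - {p})) = card (run_ends A) - 1" using fe by (simp add: card_Diff_singleton)
  moreover have "card (run_ends A) \<ge> 1" using \<open>p \<in> run_ends A\<close> fe by (metis One_nat_def Suc_leI card_gt_0_iff empty_iff)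
  moreover have "card (A - {p}) = card A - 1" using pA fin by (simp add: card_Diff_singleton)
  moreover have "card A \<ge> 1" using pA fin by (metis One_nat_def Suc_leI card_gt_0_iff empty_iff)
  ultimately show ?thesis unfolding forest_weight_def by linarith
qed

lemma forest_weight_Diff_first:
  assumes fin: "finite A" and s: "s \<in> A" "Suc s \<in> A" and st: "\<forall>x. Suc x = s \<longrightarrow> x \<notin> A"
  shows "forest_weight (A - {s}) + 1 = forest_weight A"
proof -
  have "run_ends (A - {s}) = run_ends A"
    using run_ends_Diff_singleton[OF s(1)] st s unfolding run_ends_def by auto
  then have "card (run_ends (A - {s})) = card (run_ends A)" by simp
  moreover have "card (A - {s}) = card A - 1" using s fin by (simp add: card_Diff_singleton)
  moreover have "card A \<ge> 1" using s fin by (metis One_nat_def Suc_leI card_gt_0_iff empty_iff)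
  ultimately show ?thesis unfolding forest_weight_def by linarith
qed

lemma run_Diff_singletonD:
  assumes r: "run A s t" and v: "s \<le> v" "v \<le> t" and r': "run (A - {v}) a b"
  shows "(run A a b \<and> (a, b) \<noteq> (s, t)) \<or> (a = s \<and> Suc b = v) \<or> (a = Suc v \<and> b = t)"
proof -
  note c = runD[OF r] and c' = runD[OF r']
  consider "Suc b = v" | "a = Suc v" | "Suc b \<noteq> v" "a \<noteq> Suc v" by blast
  then show ?thesis
  proof cases
    case 1
    have "\<not> s < a"
    proof
      assume "s < a"
      then have "a - 1 \<in> A - {v}" using c(2)[of "a - 1"] c'(1) 1 v by auto
      then show False using c'(3)[of "a - 1"] \<open>s < a\<close> by simp
    qed
    moreover have "\<not> a < s"
    proof
      assume "a < s"
      then have "s - 1 \<in> A" using c'(2)[of "s - 1"] 1 v by auto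
      then show False using c(3)[of "s - 1"] \<open>a < s\<close> by simp
    qed
    ultimately show ?thesis using 1 by simp
  next
    case 2
    have "\<not> b < t"
    proof
      assume "b < t"
      then have "Suc b \<in> A - {v}" using c(2)[of "Suc b"] c'(1) 2 v by auto
      then show False using c'(4) by simp
    qed
    moreover have "\<not> t < b"
    proof
      assume "t < b"
      then have "Suc t \<in> A" using c'(2)[of "Suc t"] 2 v by auto
      then show False using c(4) by simp
    qed
    ultimately show ?thesis using 2 by simp
  next
    case 3
    have "run A a b" using c' 3 by (intro runI) auto
    moreover have "(a, b) \<noteq> (s, t)" using c'(2)[of v] v by auto
    ultimately show ?thesis by blast
  qed
qed

lemma point_determining_linear_forest_Diff:
  assumes pd: "point_determining (linear_forest A)" and r: "run A s t" "s \<le> v" "v \<le> t"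
    and no3: "v \<noteq> s + 3" "t \<noteq> v + 3"
    and iso: "v = Suc s \<or> Suc v = t \<Longrightarrow> (\<forall>a. \<not> run A a a) \<and> \<not> (v = Suc s \<and> Suc v = t)"
  shows "point_determining (linear_forest (A - {v}))"
proof -
  have iso1: "\<And>a b. run A a a \<Longrightarrow> run A b b \<Longrightarrow> a = b" and no3A: "\<And>x. \<not> run A x (Suc (Suc x))"
    using pd unfolding point_determining_linear_forest_iff by blast+
  note D = run_Diff_singletonD[OF r]
  show ?thesis
    unfolding point_determining_linear_forest_iff
  proof (intro conjI allI impI notI)
    fix a b assume a: "run (A - {v}) a a" and b: "run (A - {v}) b b"
    show "a = b"
    proof (cases "v = Suc s \<or> Suc v = t")
      case True
      with iso have no_old: "\<And>a. \<not> run A a a" and one: "\<not> (v = Suc s \<and> Suc v = t)" by auto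
      have "(a = s \<and> Suc a = v) \<or> (a = Suc v \<and> a = t)" using D[OF a] no_old by blast
      moreover have "(b = s \<and> Suc b = v) \<or> (b = Suc v \<and> b = t)" using D[OF b] no_old by blast
      ultimately show ?thesis using one by auto
    next
      case False
      then have "run A a a" "run A b b" using D[OF a] D[OF b] by auto
      then show ?thesis by (rule iso1)
    qed
  next
    fix x assume "run (A - {v}) x (Suc (Suc x))"
    from D[OF this] show False using no3 no3A[of x] by auto
  qed
qed

locale linear_forest_obstruction =
  fixes H :: graph and N :: nat and A :: "nat set"
  assumes wf_target: "wf_graph H"
    and density: "edge_density_bound H N"
    and prefix: "induced_path_prefix H N"
    and finite_forest: "finite A"
    and obstruction: "minimal_obstruction H (linear_forest A)"
begin

lemma point_determining: "point_determining (linear_forest A)"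
  using minimal_obstruction_point_determining[OF obstruction wf_target] .

lemma isolated_unique: "run A a a \<Longrightarrow> run A b b \<Longrightarrow> a = b"
  using point_determining point_determining_linear_forest_isolated by blast

lemma no_run3: "\<not> run A s (Suc (Suc s))"
  using point_determining point_determining_linear_forest_no_run3 by blast

lemma weight_gt: "N < forest_weight A"
  using full_colourable_linear_forest[OF finite_forest prefix] obstruction
  unfolding minimal_obstruction_def by (meson not_le)

lemma weight_Diff_le:
  assumes v: "v \<in> A" and pd: "point_determining (linear_forest (A - {v}))"
  shows "forest_weight (A - {v}) \<le> N"
proof -
  have "A - {v} \<subset> verts (linear_forest A)" using v by auto
  then have "full_colourable (induced (linear_forest A) (A - {v})) H"
    using obstruction unfolding minimal_obstruction_def by blast
  then obtain \<phi> where "full_hom \<phi> (linear_forest (A - {v})) H"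
    unfolding full_colourable_def induced_linear_forest[OF Diff_subset] by blast
  then show ?thesis
    using full_hom_linear_forest_weight_le[OF wf_target density _ _ pd] finite_forest by blast
qed

text \<open>Deleting an inner vertex of a run does not change the weight, so it must destroy
  point-determinacy.\<close>

lemma Diff_inner_not_point_determining:
  assumes "v \<in> A" "Suc v \<in> A" "u \<in> A" "Suc u = v"
  shows "\<not> point_determining (linear_forest (A - {v}))"
proof
  assume "point_determining (linear_forest (A - {v}))"
  with assms(1) have "forest_weight (A - {v}) \<le> N" by (rule weight_Diff_le)
  then show False using forest_weight_Diff_inner[OF finite_forest assms] weight_gt by simp
qed

lemma run_length:
  assumes r: "run A s t"
  shows "t - s = 0 \<or> t - s = 1 \<or> t - s = 3 \<or> t - s = 5"
proof (rule ccontr)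
  assume bad: "\<not> ?thesis"
  have "t \<noteq> Suc (Suc s)" using no_run3 r by blast
  then have big: "s + 4 \<le> t" "t \<noteq> s + 5" using bad runD(1)[OF r] by auto
  have "point_determining (linear_forest (A - {s + 2}))"
    using point_determining_linear_forest_Diff[OF point_determining r, of "s + 2"] big by auto
  moreover have "s + 2 \<in> A" "Suc (s + 2) \<in> A" "s + 1 \<in> A"
    using runD(2)[OF r] big by auto
  ultimately show False using Diff_inner_not_point_determining[of "s + 2" "s + 1"] by simp
qed

lemma weight_le: "forest_weight A \<le> N + 2"
proof (cases "\<exists>p. run A p p")
  case True
  then obtain p where p: "run A p p" by blast
  have "point_determining (linear_forest (A - {p}))"
    using point_determining_linear_forest_Diff[OF point_determining p] by simp
  then have "forest_weight (A - {p}) \<le> N" using weight_Diff_le runD(2)[OF p] by blast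
  then show ?thesis using forest_weight_Diff_isolated[OF finite_forest p] by simp
next
  case False
  have "A \<noteq> {}"
  proof
    assume "A = {}"
    then have "full_hom id (linear_forest A) H" unfolding full_hom_def by simp
    then show False using obstruction unfolding minimal_obstruction_def full_colourable_def by blast
  qed
  then obtain s t where r: "run A s t" using run_exists[OF finite_forest] by blast
  have "t \<noteq> s" using False r by blast
  have "t = Suc s"
  proof (rule ccontr)
    assume "t \<noteq> Suc s"
    then have "t = s + 3 \<or> t = s + 5" using run_length[OF r] \<open>t \<noteq> s\<close> runD(1)[OF r] by auto
    then have "point_determining (linear_forest (A - {Suc s}))"
      using point_determining_linear_forest_Diff[OF point_determining r, of "Suc s"] False by auto
    moreover have "Suc s \<in> A" "Suc (Suc s) \<in> A" "s \<in> A"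
      using runD(2)[OF r] \<open>t = s + 3 \<or> t = s + 5\<close> by auto
    ultimately show False using Diff_inner_not_point_determining[of "Suc s" s] by simp
  qed
  have "point_determining (linear_forest (A - {s}))"
    using point_determining_linear_forest_Diff[OF point_determining r, of s] False \<open>t = Suc s\<close> by auto
  then have "forest_weight (A - {s}) \<le> N" using weight_Diff_le runD(2)[OF r] \<open>t = Suc s\<close> by auto
  moreover have "forest_weight (A - {s}) + 1 = forest_weight A"
    using forest_weight_Diff_first[OF finite_forest] runD[OF r] \<open>t = Suc s\<close> by auto
  ultimately show ?thesis by simp
qed

end

definition runs :: "nat set \<Rightarrow> (nat \<times> nat) set" where
  "runs A = {(s, t). run A s t}"

text \<open>\<open>run_count A d\<close> is the number of runs with \<open>d + 1\<close> elements.\<close>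

definition run_count :: "nat set \<Rightarrow> nat \<Rightarrow> nat" where
  "run_count A d = card {p \<in> runs A. snd p - fst p = d}"

lemma runs_subset: "runs A \<subseteq> A \<times> A"
  unfolding runs_def run_def by auto

lemma finite_runs: "finite A \<Longrightarrow> finite (runs A)"
  using runs_subset finite_subset by blast

lemma runs_Diff_run:
  assumes c: "run A s t"
  shows "runs (A - {s..t}) = runs A - {(s, t)}"
proof
  note cd = runD[OF c]
  show "runs (A - {s..t}) \<subseteq> runs A - {(s, t)}"
  proof
    fix p assume "p \<in> runs (A - {s..t})"
    then obtain s' t' where p: "p = (s', t')" and c': "run (A - {s..t}) s' t'" unfolding runs_def by auto
    note cd' = runD[OF c']
    have "run A s' t'"
    proof (rule runI)
      show "s' \<le> t'" using cd'(1) .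
      show "x \<in> A" if "s' \<le> x" "x \<le> t'" for x using cd'(2)[OF that] by simp
      show "x \<notin> A" if "Suc x = s'" for x
      proof
        assume xA: "x \<in> A"
        have "x \<in> {s..t}" using cd'(3)[OF that] xA by blast
        moreover have "s' \<notin> {s..t}" using cd'(2)[of s'] cd'(1) by simp
        ultimately have "s' = Suc t" using that by auto
        then show False using cd(4) cd'(2)[of s'] cd'(1) by simp
      qed
      show "Suc t' \<notin> A"
      proof
        assume "Suc t' \<in> A"
        then have "Suc t' \<in> {s..t}" using cd'(4) by blast
        moreover have "t' \<notin> {s..t}" using cd'(2)[of t'] cd'(1) by simp
        ultimately have "Suc t' = s" by auto
        then show False using cd(3) cd'(2)[of t'] cd'(1) by auto
      qed
    qed
    moreover have "s' \<noteq> s" using cd'(2)[of s'] cd'(1) cd(1) by auto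
    ultimately show "p \<in> runs A - {(s, t)}" using p unfolding runs_def by auto
  qed
  show "runs A - {(s, t)} \<subseteq> runs (A - {s..t})"
  proof
    fix p assume "p \<in> runs A - {(s, t)}"
    then obtain s' t' where p: "p = (s', t')" and c': "run A s' t'" and ne: "(s', t') \<noteq> (s, t)"
      unfolding runs_def by auto
    note cd' = runD[OF c']
    have disj: "\<not> (s \<le> x \<and> x \<le> t)" if "s' \<le> x" "x \<le> t'" for x
    proof
      assume "s \<le> x \<and> x \<le> t"
      then have "s = s' \<and> t = t'" using run_unique[OF c c'] that by blast
      then show False using ne by simp
    qed
    have "run (A - {s..t}) s' t'"
    proof (rule runI)
      show "s' \<le> t'" using cd'(1) .
      show "x \<in> A - {s..t}" if "s' \<le> x" "x \<le> t'" for x using cd'(2)[OF that] disj[OF that] by simp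
      show "x \<notin> A - {s..t}" if "Suc x = s'" for x using cd'(3)[OF that] by simp
      show "Suc t' \<notin> A - {s..t}" using cd'(4) by simp
    qed
    then show "p \<in> runs (A - {s..t})" using p unfolding runs_def by simp
  qed
qed

lemma run_count_Diff_run:
  assumes fin: "finite A" and c: "run A s t"
  shows "run_count (A - {s..t}) d = (if d = t - s then run_count A d - 1 else run_count A d)"
proof -
  have "{p \<in> runs (A - {s..t}). snd p - fst p = d} = {p \<in> runs A. snd p - fst p = d} - {(s, t)}"
    using runs_Diff_run[OF c] by auto
  moreover have "finite {p \<in> runs A. snd p - fst p = d}" using finite_runs[OF fin] by simp
  moreover have "(s, t) \<in> runs A" using c unfolding runs_def by simp
  ultimately show ?thesis unfolding run_count_def by (auto simp: card_Diff_singleton)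
qed

lemma forest_weight_Diff_run:
  assumes fin: "finite A" and c: "run A s t"
  shows "forest_weight (A - {s..t}) + (t - s + 2) = forest_weight A"
proof -
  note cd = runD[OF c]
  have IA: "{s..t} \<subseteq> A" using cd(2) by auto
  have c1: "card (A - {s..t}) = card A - (t - s + 1)"
    using card_Diff_subset[OF _ IA] fin cd(1) by (simp add: Suc_diff_le)
  have c1': "t - s + 1 \<le> card A" using card_mono[OF fin IA] cd(1) by (simp add: Suc_diff_le)
  have "run_ends (A - {s..t}) = run_ends A - {t}"
  proof
    show "run_ends (A - {s..t}) \<subseteq> run_ends A - {t}"
    proof
      fix x assume x: "x \<in> run_ends (A - {s..t})"
      then have xA: "x \<in> A" "x \<notin> {s..t}" unfolding run_ends_def by auto
      have "Suc x \<notin> A"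
      proof
        assume sA: "Suc x \<in> A"
        then have "Suc x \<in> {s..t}" using x unfolding run_ends_def by auto
        then have "Suc x = s" using xA by auto
        then show False using cd(3) xA by blast
      qed
      then show "x \<in> run_ends A - {t}" using xA cd(1) unfolding run_ends_def by auto
    qed
    show "run_ends A - {t} \<subseteq> run_ends (A - {s..t})"
    proof
      fix x assume x: "x \<in> run_ends A - {t}"
      have "x \<notin> {s..t}"
      proof
        assume "x \<in> {s..t}"
        then have "Suc x \<in> A" using x cd(2) by auto
        then show False using x unfolding run_ends_def by auto
      qed
      then show "x \<in> run_ends (A - {s..t})" using x unfolding run_ends_def by auto
    qed
  qed
  moreover have "t \<in> run_ends A" using cd unfolding run_ends_def by auto
  moreover have "finite (run_ends A)" using fin unfolding run_ends_def by simp
  ultimately have c2: "card (run_ends (A - {s..t})) = card (run_ends A) - 1" by (simp add: card_Diff_singleton)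
  have c2': "card (run_ends A) \<ge> 1" using \<open>t \<in> run_ends A\<close> \<open>finite (run_ends A)\<close>
    by (metis One_nat_def Suc_leI card_gt_0_iff empty_iff)
  show ?thesis unfolding forest_weight_def using c1 c1' c2 c2' by linarith
qed

lemma card_Diff_run_less:
  assumes fin: "finite A" and c: "run A s t"
  shows "card (A - {s..t}) < card A"
proof -
  have "{s..t} \<subseteq> A" "{s..t} \<noteq> {}" using runD[OF c] by auto
  then have "A - {s..t} \<subset> A" by blast
  then show ?thesis using fin psubset_card_mono by blast
qed

lemma runs_empty: "runs {} = {}" unfolding runs_def run_def by auto

lemma run_count_pos:
  assumes "finite A" "run A s t"
  shows "0 < run_count A (t - s)"
  unfolding run_count_def card_gt_0_iff using finite_runs[OF assms(1)] assms(2) by (auto simp: runs_def)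

lemma run_count_pos_obtain:
  assumes "0 < run_count A d" obtains s t where "run A s t" "t - s = d"
proof -
  have "{p \<in> runs A. snd p - fst p = d} \<noteq> {}" using assms unfolding run_count_def by (metis card.empty less_irrefl)
  then obtain p where "p \<in> runs A" "snd p - fst p = d" by blast
  then show ?thesis using that unfolding runs_def by (cases p) auto
qed

lemma forest_weight_eq_run_counts:
  assumes "finite A" "\<forall>s t. run A s t \<longrightarrow> t - s = 0 \<or> t - s = 1 \<or> t - s = 3 \<or> t - s = 5"
  shows "forest_weight A = 2 * run_count A 0 + 3 * run_count A 1 + 5 * run_count A 3 + 7 * run_count A 5"
  using assms
proof (induction "card A" arbitrary: A rule: less_induct)
  case less
  show ?case
  proof (cases "A = {}")
    case True
    then show ?thesis unfolding forest_weight_def run_count_def run_ends_def by (simp add: runs_empty)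
  next
    case False
    then obtain a where "a \<in> A" by blast
    then obtain s t where c: "run A s t" using run_exists[OF less.prems(1)] by blast
    define A' where "A' = A - {s..t}"
    have finA': "finite A'" unfolding A'_def using less.prems(1) by simp
    have lt: "card A' < card A" unfolding A'_def using card_Diff_run_less[OF less.prems(1) c] .
    have h': "\<forall>s t. run A' s t \<longrightarrow> t - s = 0 \<or> t - s = 1 \<or> t - s = 3 \<or> t - s = 5"
    proof (intro allI impI)
      fix s' t' assume "run A' s' t'"
      then have "(s', t') \<in> runs A" using runs_Diff_run[OF c] unfolding A'_def runs_def by blast
      then have "run A s' t'" unfolding runs_def by simp
      then show "t' - s' = 0 \<or> t' - s' = 1 \<or> t' - s' = 3 \<or> t' - s' = 5" using less.prems(2) by blast
    qed
    have IH: "forest_weight A' = 2 * run_count A' 0 + 3 * run_count A' 1 + 5 * run_count A' 3 + 7 * run_count A' 5"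
      using less.hyps[OF lt finA' h'] .
    have X: "\<And>d. run_count A' d = (if d = t - s then run_count A d - 1 else run_count A d)"
      unfolding A'_def using run_count_Diff_run[OF less.prems(1) c] .
    have M: "forest_weight A' + (t - s + 2) = forest_weight A" unfolding A'_def using forest_weight_Diff_run[OF less.prems(1) c] .
    have P: "0 < run_count A (t - s)" using run_count_pos[OF less.prems(1) c] .
    have "t - s = 0 \<or> t - s = 1 \<or> t - s = 3 \<or> t - s = 5" using less.prems(2) c by blast
    then show ?thesis
    proof (elim disjE)
      assume d: "t - s = 0"
      show ?thesis using IH X[of 0] X[of 1] X[of 3] X[of 5] M P d by simp
    next
      assume d: "t - s = 1"
      show ?thesis using IH X[of 0] X[of 1] X[of 3] X[of 5] M P d by simp
    next
      assume d: "t - s = 3"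
      show ?thesis using IH X[of 0] X[of 1] X[of 3] X[of 5] M P d by simp
    next
      assume d: "t - s = 5"
      show ?thesis using IH X[of 0] X[of 1] X[of 3] X[of 5] M P d by simp
    qed
  qed
qed

lemma isomorphism_linear_forestI:
  assumes "bij_betw h A B" "\<And>x y. x \<in> A \<Longrightarrow> y \<in> A \<Longrightarrow> consecutive x y \<longleftrightarrow> consecutive (h x) (h y)"
  shows "isomorphism h (linear_forest A) (linear_forest B)"
proof -
  have "adj (linear_forest A) x y = adj (linear_forest B) (h x) (h y)" if "x \<in> A" "y \<in> A" for x y
  proof -
    have "h x \<in> B" "h y \<in> B" using assms(1) that by (meson bij_betwE)+
    then show ?thesis using assms(2) that by (simp add: adj_linear_forest)
  qed
  then show ?thesis using assms(1) unfolding isomorphism_def by simp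
qed

lemma isomorphism_linear_forestD:
  assumes "isomorphism h (linear_forest A) (linear_forest B)" "x \<in> A" "y \<in> A"
  shows "h x \<in> B" "consecutive x y \<longleftrightarrow> consecutive (h x) (h y)"
proof -
  show hx: "h x \<in> B" using assms unfolding isomorphism_def by (auto dest: bij_betwE)
  have hy: "h y \<in> B" using assms unfolding isomorphism_def by (auto dest: bij_betwE)
  have "adj (linear_forest A) x y = adj (linear_forest B) (h x) (h y)" using assms unfolding isomorphism_def by simp
  then show "consecutive x y \<longleftrightarrow> consecutive (h x) (h y)" using assms hx hy by (simp add: adj_linear_forest)
qed

lemma isomorphism_linear_forest_add_run:
  assumes g: "isomorphism g (linear_forest (A - {s..t})) (linear_forest (B - {s'..t'}))"
    and c: "run A s t" and c': "run B s' t'" and d: "t' - s' = t - s"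
  shows "isomorphism (\<lambda>a. if s \<le> a \<and> a \<le> t then s' + (a - s) else g a) (linear_forest A) (linear_forest B)"
proof -
  note cd = runD[OF c] and cd' = runD[OF c']
  define h where "h = (\<lambda>a. if s \<le> a \<and> a \<le> t then s' + (a - s) else g a)"
  have "bij_betw (\<lambda>a. s' + (a - s)) {s..t} {s'..t'}"
    by (rule bij_betw_byWitness[where f' = "\<lambda>b. s + (b - s')"]) (use d cd(1) cd'(1) in auto)
  then have b1: "bij_betw h {s..t} {s'..t'}" by (rule bij_betw_cong[THEN iffD1, rotated]) (auto simp: h_def)
  have "bij_betw g (A - {s..t}) (B - {s'..t'})" using g unfolding isomorphism_def by simp
  then have b2: "bij_betw h (A - {s..t}) (B - {s'..t'})"
    by (rule bij_betw_cong[THEN iffD1, rotated]) (auto simp: h_def)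
  have "bij_betw h ((A - {s..t}) \<union> {s..t}) ((B - {s'..t'}) \<union> {s'..t'})"
    by (rule bij_betw_combine[OF b2 b1]) auto
  moreover have "(A - {s..t}) \<union> {s..t} = A" "(B - {s'..t'}) \<union> {s'..t'} = B" using cd(2) cd'(2) by auto
  ultimately have bb: "bij_betw h A B" by simp
  have hB: "h x \<in> B" "s' \<le> h x \<and> h x \<le> t' \<longleftrightarrow> s \<le> x \<and> x \<le> t" if "x \<in> A" for x
    using that bij_betwE[OF b1] bij_betwE[OF b2] cd'(2) by (cases "s \<le> x \<and> x \<le> t"; fastforce)+
  have mixed: "\<not> consecutive x y \<and> \<not> consecutive (h x) (h y)"
    if "x \<in> A" "y \<in> A" "s \<le> x \<and> x \<le> t" "\<not> (s \<le> y \<and> y \<le> t)" for x y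
    using that run_not_consecutive[OF c, of x y] run_not_consecutive[OF c', of "h x" "h y"] hB by blast
  have "consecutive x y \<longleftrightarrow> consecutive (h x) (h y)" if x: "x \<in> A" and y: "y \<in> A" for x y
  proof (cases "s \<le> x \<and> x \<le> t"; cases "s \<le> y \<and> y \<le> t")
    assume "s \<le> x \<and> x \<le> t" "s \<le> y \<and> y \<le> t"
    then show ?thesis unfolding h_def consecutive_def by auto
  next
    assume "\<not> (s \<le> x \<and> x \<le> t)" "\<not> (s \<le> y \<and> y \<le> t)"
    then show ?thesis using isomorphism_linear_forestD(2)[OF g, of x y] x y unfolding h_def by auto
  qed (use mixed x y consecutive_commute in blast)+
  with bb show ?thesis unfolding h_def by (rule isomorphism_linear_forestI)
qed

lemma linear_forests_isomorphic_if_run_counts_eq: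
  assumes "finite A" "finite B" "\<forall>d. run_count A d = run_count B d"
  shows "\<exists>h. isomorphism h (linear_forest A) (linear_forest B)"
  using assms
proof (induction "card A" arbitrary: A B rule: less_induct)
  case less
  note finA = less.prems(1) and finB = less.prems(2) and X = less.prems(3)
  show ?case
  proof (cases "A = {}")
    case True
    have "B = {}"
    proof (rule ccontr)
      assume "B \<noteq> {}"
      then obtain b where "b \<in> B" by blast
      then obtain s t where "run B s t" using run_exists[OF finB] by blast
      then have "0 < run_count B (t - s)" using run_count_pos[OF finB] by blast
      moreover have "run_count A (t - s) = 0" using True unfolding run_count_def by (simp add: runs_empty)
      ultimately show False using X by simp
    qed
    then have "isomorphism id (linear_forest A) (linear_forest B)" using True by (intro isomorphism_linear_forestI) auto
    then show ?thesis by blast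
  next
    case False
    then obtain a where "a \<in> A" by blast
    then obtain s t where c: "run A s t" using run_exists[OF finA] by blast
    have "0 < run_count B (t - s)" using run_count_pos[OF finA c] X by simp
    then obtain s' t' where c': "run B s' t'" and d: "t' - s' = t - s" by (rule run_count_pos_obtain)
    define A' where "A' = A - {s..t}"
    define B' where "B' = B - {s'..t'}"
    have finA': "finite A'" "finite B'" unfolding A'_def B'_def using finA finB by auto
    have lt: "card A' < card A" unfolding A'_def using card_Diff_run_less[OF finA c] .
    have X': "\<forall>d. run_count A' d = run_count B' d"
      unfolding A'_def B'_def using run_count_Diff_run[OF finA c] run_count_Diff_run[OF finB c'] X d by simp
    obtain g where g: "isomorphism g (linear_forest A') (linear_forest B')" using less.hyps[OF lt finA' X'] by blast
    from isomorphism_linear_forest_add_run[OF g[unfolded A'_def B'_def] c c' d]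
    show ?thesis by blast
  qed
qed

section \<open>Cycles\<close>

definition cycle_succ :: "nat \<Rightarrow> nat \<Rightarrow> nat" where
  "cycle_succ k i = (if Suc i = k then 0 else Suc i)"

lemma Suc_mod_eq_cycle_succ: "i < k \<Longrightarrow> Suc i mod k = cycle_succ k i"
  unfolding cycle_succ_def by auto

lemma cycle_succ_inj: "i < k \<Longrightarrow> j < k \<Longrightarrow> cycle_succ k i = cycle_succ k j \<Longrightarrow> i = j"
  unfolding cycle_succ_def by (auto split: if_splits)

lemma adj_cycle_graph:
  assumes k: "2 \<le> k"
  shows "adj (cycle_graph k) i j \<longleftrightarrow> i < k \<and> j < k \<and> (j = cycle_succ k i \<or> i = cycle_succ k j)"
proof
  assume "adj (cycle_graph k) i j"
  then obtain a where a: "a < k" "{i, j} = {a, Suc a mod k}" unfolding adj_def cycle_graph_def edges_def by auto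
  then have m: "Suc a mod k = cycle_succ k a" by (simp add: Suc_mod_eq_cycle_succ)
  have "cycle_succ k a < k" using a k unfolding cycle_succ_def by auto
  then show "i < k \<and> j < k \<and> (j = cycle_succ k i \<or> i = cycle_succ k j)" using a m by (auto simp: doubleton_eq_iff)
next
  assume h: "i < k \<and> j < k \<and> (j = cycle_succ k i \<or> i = cycle_succ k j)"
  then consider "i < k" "j = Suc i mod k" | "j < k" "i = Suc j mod k" using Suc_mod_eq_cycle_succ by auto
  then show "adj (cycle_graph k) i j"
  proof cases
    case 1 then show ?thesis unfolding adj_def cycle_graph_def edges_def by auto
  next
    case 2 then have "{i, j} = {j, Suc j mod k}" by auto
    then show ?thesis using 2 unfolding adj_def cycle_graph_def edges_def by auto
  qed
qed

lemma verts_cycle_graph [simp]: "verts (cycle_graph k) = {0..<k}" by (simp add: cycle_graph_def verts_def)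

lemma wf_graph_cycle_graph: assumes k: "2 \<le> k" shows "wf_graph (cycle_graph k)"
proof -
  have "\<exists>x y. x \<noteq> y \<and> x \<in> {0..<k} \<and> y \<in> {0..<k} \<and> e = {x, y}" if e: "e \<in> edges (cycle_graph k)" for e
  proof -
    obtain a where a: "a < k" "e = {a, Suc a mod k}" using e unfolding cycle_graph_def edges_def by auto
    have "Suc a mod k \<noteq> a" "Suc a mod k < k" using a k by (auto simp: Suc_mod_eq_cycle_succ cycle_succ_def)
    then show ?thesis using a by (intro exI[of _ a] exI[of _ "Suc a mod k"]) auto
  qed
  then show ?thesis unfolding wf_graph_def by simp
qed

definition cycle_plus_vertex :: "nat \<Rightarrow> graph" where
  "cycle_plus_vertex k = ({0..k}, edges (cycle_graph k))"

lemma verts_cycle_plus_vertex [simp]: "verts (cycle_plus_vertex k) = {0..k}" by (simp add: cycle_plus_vertex_def verts_def)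
lemma adj_cycle_plus_vertex: "adj (cycle_plus_vertex k) i j = adj (cycle_graph k) i j" by (simp add: cycle_plus_vertex_def adj_def edges_def)

lemma wf_graph_cycle_plus_vertex: assumes k: "2 \<le> k" shows "wf_graph (cycle_plus_vertex k)"
proof -
  have W: "\<forall>e\<in>edges (cycle_graph k). \<exists>x y. x \<noteq> y \<and> x \<in> {0..<k} \<and> y \<in> {0..<k} \<and> e = {x, y}"
    using wf_graph_cycle_graph[OF k] unfolding wf_graph_def by simp
  have "\<exists>x y. x \<noteq> y \<and> x \<in> {0..k} \<and> y \<in> {0..k} \<and> e = {x, y}" if e: "e \<in> edges (cycle_plus_vertex k)" for e
  proof -
    have "e \<in> edges (cycle_graph k)" using e by (simp add: cycle_plus_vertex_def edges_def)
    then obtain x y where "x \<noteq> y" "x \<in> {0..<k}" "y \<in> {0..<k}" "e = {x, y}" using W by blast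
    then show ?thesis by (intro exI[of _ x] exI[of _ y]) auto
  qed
  then show ?thesis unfolding wf_graph_def by simp
qed

lemma point_determining_cycle_graph:
  assumes k: "3 \<le> k" "k \<noteq> 4"
  shows "point_determining (cycle_graph k)"
  unfolding point_determining_def
proof (intro ballI impI)
  fix i j assume i: "i \<in> verts (cycle_graph k)" and j: "j \<in> verts (cycle_graph k)" and ne: "i \<noteq> j"
    and na: "\<not> adj (cycle_graph k) i j"
  have ik: "i < k" and jk: "j < k" using i j by auto
  have k2: "2 \<le> k" using k by simp
  have na': "\<not> (j = cycle_succ k i \<or> i = cycle_succ k j)" using na ik jk adj_cycle_graph[OF k2] by simp
  define z where "z = cycle_succ k i"
  have zk: "z < k" unfolding z_def cycle_succ_def using ik k by auto
  show "\<exists>z\<in>verts (cycle_graph k). adj (cycle_graph k) i z \<noteq> adj (cycle_graph k) j z"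
  proof (cases "adj (cycle_graph k) j z")
    case False
    have "adj (cycle_graph k) i z" using adj_cycle_graph[OF k2] ik zk unfolding z_def by simp
    then show ?thesis using False zk by auto
  next
    case True
    then have "z = cycle_succ k j \<or> j = cycle_succ k z" using adj_cycle_graph[OF k2] by simp
    moreover have "z \<noteq> cycle_succ k j" using cycle_succ_inj[OF ik jk] ne unfolding z_def by blast
    ultimately have jz: "j = cycle_succ k z" by blast
    define z' where "z' = (if i = 0 then k - 1 else i - 1)"
    have z'k: "z' < k" unfolding z'_def using ik k by auto
    have iz': "i = cycle_succ k z'" unfolding z'_def cycle_succ_def using ik k by auto
    have "\<not> adj (cycle_graph k) j z'"
    proof
      assume "adj (cycle_graph k) j z'"
      then have "z' = cycle_succ k j \<or> j = cycle_succ k z'" using adj_cycle_graph[OF k2] by simp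
      then show False using iz' jz ne ik k unfolding z_def z'_def cycle_succ_def by (auto split: if_splits)
    qed
    moreover have "adj (cycle_graph k) i z'" using adj_cycle_graph[OF k2] ik z'k iz' by simp
    ultimately show ?thesis using z'k by auto
  qed
qed

lemma induced_cycle_graph_path:
  assumes k: "3 \<le> k"
  shows "induced (cycle_graph k) {0..<k-1} = linear_forest {0..<k-1}"
proof (rule graph_eqI)
  show "wf_graph (induced (cycle_graph k) {0..<k-1})" using wf_graph_induced[OF wf_graph_cycle_graph] k by auto
  show "wf_graph (linear_forest {0..<k-1})" by (rule wf_graph_linear_forest) simp
  show "verts (induced (cycle_graph k) {0..<k-1}) = verts (linear_forest {0..<k-1})" by simp
  fix x y
  have k2: "2 \<le> k" using k by simp
  show "adj (induced (cycle_graph k) {0..<k-1}) x y \<longleftrightarrow> adj (linear_forest {0..<k-1}) x y"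
    unfolding adj_induced adj_linear_forest adj_cycle_graph[OF k2] consecutive_def cycle_succ_def by auto
qed

lemma induced_cycle_plus_vertex_forest:
  assumes k: "3 \<le> k"
  shows "induced (cycle_plus_vertex k) ({0..<k-1} \<union> {k}) = linear_forest ({0..<k-1} \<union> {k})"
proof (rule graph_eqI)
  show "wf_graph (induced (cycle_plus_vertex k) ({0..<k-1} \<union> {k}))" using k by (intro wf_graph_induced[OF wf_graph_cycle_plus_vertex]) auto
  show "wf_graph (linear_forest ({0..<k-1} \<union> {k}))" by (rule wf_graph_linear_forest) simp
  show "verts (induced (cycle_plus_vertex k) ({0..<k-1} \<union> {k})) = verts (linear_forest ({0..<k-1} \<union> {k}))" by simp
  fix x y
  have k2: "2 \<le> k" using k by simp
  show "adj (induced (cycle_plus_vertex k) ({0..<k-1} \<union> {k})) x y \<longleftrightarrow> adj (linear_forest ({0..<k-1} \<union> {k})) x y"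
    unfolding adj_induced adj_linear_forest adj_cycle_plus_vertex adj_cycle_graph[OF k2] consecutive_def cycle_succ_def by auto
qed

lemma minimal_obstruction_induced_forest_weight_le:
  assumes wfH: "wf_graph H" and density: "edge_density_bound H N"
    and ob: "minimal_obstruction H G" and BV: "B \<subset> verts G" and ind: "induced G B = linear_forest B"
    and fin: "finite B" and pd: "point_determining (linear_forest B)"
  shows "forest_weight B \<le> N"
proof -
  have "full_colourable (induced G B) H" using ob BV unfolding minimal_obstruction_def by blast
  then obtain \<phi> where "full_hom \<phi> (linear_forest B) H" using ind unfolding full_colourable_def by auto
  then show ?thesis using full_hom_linear_forest_weight_le[OF wfH density fin _ pd] by blast
qed

lemma cycle_graph_obstruction_le:
  assumes wfH: "wf_graph H" and density: "edge_density_bound H N"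
    and k: "3 \<le> k" "k \<noteq> 4" and ob: "minimal_obstruction H (cycle_graph k)"
  shows "k \<le> N"
proof -
  let ?B = "{0..<k-1}"
  have BV: "?B \<subset> verts (cycle_graph k)" using k by auto
  have pd: "point_determining (linear_forest ?B)"
  proof (rule point_determining_linear_forestI)
    show "\<forall>a b. run ?B a a \<longrightarrow> run ?B b b \<longrightarrow> a = b"
    proof (intro allI impI)
      fix a b assume a: "run ?B a a"
      note ad = runD[OF a]
      have "a < k - 1" "Suc a \<notin> ?B" using ad by auto
      then have "Suc a = k - 1" by simp
      then have "Suc (a - 1) = a" "a - 1 \<in> ?B" using k by auto
      then show "a = b" using ad(3) by blast
    qed
    show "\<forall>s. \<not> run ?B s (Suc (Suc s))"
    proof (intro allI notI)
      fix s assume c: "run ?B s (Suc (Suc s))"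
      note cd = runD[OF c]
      have s2: "Suc (Suc s) < k - 1" "\<not> Suc (Suc (Suc s)) < k - 1" using cd by auto
      show False
      proof (cases "s = 0")
        case True then show False using s2 k by simp
      next
        case False
        then have "Suc (s - 1) = s" "s - 1 \<in> ?B" using s2 by auto
        then show False using cd(3) by blast
      qed
    qed
  qed
  have "forest_weight ?B \<le> N" using minimal_obstruction_induced_forest_weight_le[OF wfH density ob BV induced_cycle_graph_path[OF k(1)] _ pd] by simp
  moreover have "run_ends ?B = {k - 2}" unfolding run_ends_def using k by auto
  ultimately show ?thesis unfolding forest_weight_def using k by simp
qed

lemma cycle_plus_vertex_obstruction_le:
  assumes wfH: "wf_graph H" and density: "edge_density_bound H N"
    and k: "3 \<le> k" "k \<noteq> 4" and ob: "minimal_obstruction H (cycle_plus_vertex k)"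
  shows "k + 2 \<le> N"
proof -
  let ?B = "{0..<k-1} \<union> {k}"
  have BV: "?B \<subset> verts (cycle_plus_vertex k)"
  proof
    show "?B \<subseteq> verts (cycle_plus_vertex k)" by auto
    have "k - 1 \<in> verts (cycle_plus_vertex k)" "k - 1 \<notin> ?B" using k by auto
    then show "?B \<noteq> verts (cycle_plus_vertex k)" by blast
  qed
  have pd: "point_determining (linear_forest ?B)"
  proof (rule point_determining_linear_forestI)
    have ca: "a = k" if a: "run ?B a a" for a
    proof (rule ccontr)
      assume ne: "a \<noteq> k"
      note ad = runD[OF a]
      have "a < k - 1" "Suc a \<notin> ?B" using ad ne by auto
      then have "Suc a = k - 1" by auto
      then have "Suc (a - 1) = a" "a - 1 \<in> ?B" using k by auto
      then show False using ad(3) by blast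
    qed
    show "\<forall>a b. run ?B a a \<longrightarrow> run ?B b b \<longrightarrow> a = b" using ca by blast
    show "\<forall>s. \<not> run ?B s (Suc (Suc s))"
    proof (intro allI notI)
      fix s assume c: "run ?B s (Suc (Suc s))"
      note cd = runD[OF c]
      have in3: "s \<in> ?B" "Suc s \<in> ?B" "Suc (Suc s) \<in> ?B" using cd by auto
      then have s2: "Suc (Suc s) < k - 1" using k by auto
      have s3: "Suc (Suc (Suc s)) \<notin> ?B" using cd by simp
      then have "\<not> Suc (Suc (Suc s)) < k - 1" by simp
      show False
      proof (cases "s = 0")
        case True then show False using s2 s3 k by auto
      next
        case False
        then have "Suc (s - 1) = s" "s - 1 \<in> ?B" using s2 by auto
        then show False using cd(3) by blast
      qed
    qed
  qed
  have ind: "induced (cycle_plus_vertex k) ?B = linear_forest ?B" using induced_cycle_plus_vertex_forest[OF k(1)] .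
  have "forest_weight ?B \<le> N" using minimal_obstruction_induced_forest_weight_le[OF wfH density ob BV ind _ pd] by simp
  moreover have "run_ends ?B = {k - 2, k}" unfolding run_ends_def using k by auto
  moreover have "card ?B = k" using k by simp
  ultimately show ?thesis unfolding forest_weight_def using k by simp
qed

section \<open>Minimal obstructions of admissible targets\<close>

definition max_degree_le_2 :: "graph \<Rightarrow> bool" where
  "max_degree_le_2 G \<longleftrightarrow> (\<forall>x a b c. adj G x a \<longrightarrow> adj G x b \<longrightarrow> adj G x c \<longrightarrow> a = b \<or> a = c \<or> b = c)"

definition spanning_cycles :: "graph \<Rightarrow> bool" where
  "spanning_cycles H \<longleftrightarrow> (\<forall>k g. 3 \<le> k \<longrightarrow> inj_on g {0..<k} \<longrightarrow>
     (\<forall>i<k. adj H (g i) (g (cycle_succ k i))) \<longrightarrow> g ` {0..<k} = verts H)"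

text \<open>The properties of the targets \<open>P\<^sub>n\<close> (with \<open>N = n + 1\<close>) and \<open>C\<^sub>n\<close> (with \<open>N = n\<close>) on
  which the count rests.\<close>

definition admissible_target :: "graph \<Rightarrow> nat \<Rightarrow> bool" where
  "admissible_target H N \<longleftrightarrow> wf_graph H \<and> max_degree_le_2 H \<and> edge_density_bound H N \<and>
     induced_path_prefix H N \<and> spanning_cycles H"

lemma induced_verts:
  assumes "wf_graph G"
  shows "induced G (verts G) = G"
proof -
  have W: "\<forall>e\<in>edges G. \<exists>x y. x \<noteq> y \<and> x \<in> verts G \<and> y \<in> verts G \<and> e = {x, y}"
    using assms unfolding wf_graph_def by simp
  have "\<forall>e\<in>edges G. e \<subseteq> verts G"
  proof
    fix e assume "e \<in> edges G"
    then obtain x y where "x \<in> verts G" "y \<in> verts G" "e = {x, y}" using W by blast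
    then show "e \<subseteq> verts G" by simp
  qed
  then have "{e \<in> edges G. e \<subseteq> verts G} = edges G" by blast
  then show ?thesis unfolding induced_def verts_def edges_def by simp
qed

lemma induced_induced: "T \<subseteq> S \<Longrightarrow> induced (induced G S) T = induced G T"
  unfolding induced_def edges_def by auto

lemma full_hom_induced: "full_hom \<phi> G H \<Longrightarrow> S \<subseteq> verts G \<Longrightarrow> full_hom \<phi> (induced G S) H"
  unfolding full_hom_def by (auto simp: adj_induced)

lemma point_determining_isomorphism:
  assumes f: "isomorphism f G G'" and pd: "point_determining G'"
  shows "point_determining G"
  unfolding point_determining_def
proof (intro ballI impI)
  fix x y assume x: "x \<in> verts G" and y: "y \<in> verts G" and "x \<noteq> y" "\<not> adj G x y"
  have b: "bij_betw f (verts G) (verts G')"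
    and a: "\<And>u v. u \<in> verts G \<Longrightarrow> v \<in> verts G \<Longrightarrow> adj G u v = adj G' (f u) (f v)"
    using f unfolding isomorphism_def by auto
  have fV: "f ` verts G = verts G'" using b by (simp add: bij_betw_def)
  have "f x \<noteq> f y" using b x y \<open>x \<noteq> y\<close> unfolding bij_betw_def inj_on_def by blast
  moreover have "\<not> adj G' (f x) (f y)" using a[OF x y] \<open>\<not> adj G x y\<close> by simp
  moreover have "f x \<in> verts G'" "f y \<in> verts G'" using fV x y by blast+
  ultimately obtain z' where z': "z' \<in> verts G'" "adj G' (f x) z' \<noteq> adj G' (f y) z'"
    using pd unfolding point_determining_def by blast
  from z'(1) fV obtain z where z: "z \<in> verts G" "z' = f z" by blast
  then have "adj G x z \<noteq> adj G y z" using a[OF x z(1)] a[OF y z(1)] z'(2) by simp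
  then show "\<exists>z\<in>verts G. adj G x z \<noteq> adj G y z" using z(1) by blast
qed

text \<open>A vertex with three neighbours, together with a vertex separating each pair of them,
  spans an induced subgraph that has no full colouring into a graph of maximum degree two.\<close>

lemma minimal_obstruction_degree_3_card_le:
  assumes wfH: "wf_graph H" and maxdeg: "max_degree_le_2 H" and ob: "minimal_obstruction H G"
    and xa: "adj G x a" and xb: "adj G x b" and xc: "adj G x c" and ab: "a \<noteq> b" and ac: "a \<noteq> c" and bc: "b \<noteq> c"
  shows "card (verts G) \<le> 7"
proof -
  have wfG: "wf_graph G" using ob unfolding minimal_obstruction_def by blast
  have pd: "point_determining G" using minimal_obstruction_point_determining[OF ob wfH] .
  let ?V = "verts G"
  have V: "x \<in> ?V" "a \<in> ?V" "b \<in> ?V" "c \<in> ?V" using wf_graph_adjD[OF wfG] xa xb xc by auto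
  have ex: "\<exists>z. z \<in> ?V \<and> (adj G u w \<or> adj G u z \<noteq> adj G w z)" if "u \<in> ?V" "w \<in> ?V" "u \<noteq> w" for u w
  proof (cases "adj G u w")
    case True then show ?thesis using that by blast
  next
    case False then show ?thesis using pd that unfolding point_determining_def by blast
  qed
  define d where "d = (\<lambda>u w. SOME z. z \<in> ?V \<and> (adj G u w \<or> adj G u z \<noteq> adj G w z))"
  have dP: "d u w \<in> ?V \<and> (adj G u w \<or> adj G u (d u w) \<noteq> adj G w (d u w))"
    if "u \<in> ?V" "w \<in> ?V" "u \<noteq> w" for u w
    unfolding d_def using someI_ex[OF ex[OF that]] .
  define T where "T = set [x, a, b, c, d a b, d a c, d b c]"
  have TV: "T \<subseteq> ?V" unfolding T_def using V dP ab ac bc by auto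
  have cT: "card T \<le> 7" unfolding T_def using card_length[of "[x, a, b, c, d a b, d a c, d b c]"] by simp
  have "T = ?V"
  proof (rule ccontr)
    assume "T \<noteq> ?V"
    then have "T \<subset> ?V" using TV by blast
    then obtain \<phi> where phi: "full_hom \<phi> (induced G T) H"
      using ob unfolding minimal_obstruction_def full_colourable_def by blast
    have inT: "x \<in> T" "a \<in> T" "b \<in> T" "c \<in> T" "d a b \<in> T" "d a c \<in> T" "d b c \<in> T" unfolding T_def by auto
    have n1: "\<phi> a \<noteq> \<phi> b" using full_hom_separates[OF wfH phi inT(2) inT(3) inT(5)] dP[OF V(2) V(3) ab] by blast
    have n2: "\<phi> a \<noteq> \<phi> c" using full_hom_separates[OF wfH phi inT(2) inT(4) inT(6)] dP[OF V(2) V(4) ac] by blast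
    have n3: "\<phi> b \<noteq> \<phi> c" using full_hom_separates[OF wfH phi inT(3) inT(4) inT(7)] dP[OF V(3) V(4) bc] by blast
    have A: "\<And>u w. u \<in> T \<Longrightarrow> w \<in> T \<Longrightarrow> adj G u w = adj H (\<phi> u) (\<phi> w)"
      using phi unfolding full_hom_def by (simp add: adj_induced)
    have "adj H (\<phi> x) (\<phi> a)" "adj H (\<phi> x) (\<phi> b)" "adj H (\<phi> x) (\<phi> c)"
      using A[OF inT(1) inT(2)] A[OF inT(1) inT(3)] A[OF inT(1) inT(4)] xa xb xc by auto
    then show False using maxdeg n1 n2 n3 unfolding max_degree_le_2_def by blast
  qed
  then show ?thesis using cT by simp
qed

lemma three_distinct_elements:
  assumes "finite S" "3 \<le> card S" shows "\<exists>a b c. a \<in> S \<and> b \<in> S \<and> c \<in> S \<and> a \<noteq> b \<and> a \<noteq> c \<and> b \<noteq> c"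
proof -
  obtain a where a: "a \<in> S" using assms by (metis card.empty ex_in_conv not_numeral_le_zero)
  have "card (S - {a}) \<ge> 2" using assms a by (simp add: card_Diff_singleton)
  then obtain b where b: "b \<in> S - {a}" by (metis card.empty ex_in_conv not_numeral_le_zero)
  have "card (S - {a} - {b}) \<ge> 1" using assms a b \<open>card (S - {a}) \<ge> 2\<close> by (simp add: card_Diff_singleton)
  then obtain c where c: "c \<in> S - {a} - {b}" by (metis card.empty ex_in_conv not_one_le_zero)
  show ?thesis using a b c by blast
qed

lemma max_degree_le_2_acyclic_linear_forest:
  assumes wfG: "wf_graph G" and d2: "max_degree_le_2 G" and nc: "\<not> has_cycle (adj G) (verts G)"
  obtains f A where "finite A" "isomorphism f G (linear_forest A)"
proof -
  have fin: "finite (verts G)" using wfG unfolding wf_graph_def by blast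
  have sym: "\<forall>x y. adj G x y = adj G y x" using adj_commute by blast
  have irr: "\<forall>x. \<not> adj G x x" using wf_graph_not_adj_self[OF wfG] by blast
  have deg: "\<forall>x\<in>verts G. card {y\<in>verts G. adj G x y} \<le> 2"
  proof
    fix x assume "x \<in> verts G"
    show "card {y\<in>verts G. adj G x y} \<le> 2"
    proof (rule ccontr)
      assume "\<not> ?thesis"
      then have "3 \<le> card {y\<in>verts G. adj G x y}" by simp
      then obtain a b c where "a \<in> {y\<in>verts G. adj G x y}" "b \<in> {y\<in>verts G. adj G x y}"
        "c \<in> {y\<in>verts G. adj G x y}" "a \<noteq> b" "a \<noteq> c" "b \<noteq> c"
        using three_distinct_elements[of "{y\<in>verts G. adj G x y}"] fin by auto
      then show False using d2 unfolding max_degree_le_2_def by blast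
    qed
  qed
  obtain f A where l: "linear_embedding f (adj G) (verts G) A" and finA: "finite A"
    using max_degree_two_imp_cycle_or_linear[OF fin sym irr] deg nc by blast
  have b: "bij_betw f (verts G) A" using l unfolding linear_embedding_def by blast
  have "adj G x y = adj (linear_forest A) (f x) (f y)" if "x \<in> verts G" "y \<in> verts G" for x y
    using linear_embeddingD[OF l] that by (simp add: adj_linear_forest)
  then have "isomorphism f G (linear_forest A)" using b unfolding isomorphism_def by simp
  then show ?thesis using finA that by blast
qed

lemma max_degree_le_2_cycle:
  assumes d2: "max_degree_le_2 G" and k3: "3 \<le> k" and inj: "inj_on c {0..<k}"
    and cyc: "\<forall>i<k. adj G (c i) (c (Suc i mod k))"
  shows "\<And>i j. i < k \<Longrightarrow> j < k \<Longrightarrow> adj G (c i) (c j) \<longleftrightarrow> adj (cycle_graph k) i j"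
    and "\<And>i z. i < k \<Longrightarrow> adj G (c i) z \<Longrightarrow> z \<in> c ` {0..<k}"
proof -
  have k2: "2 \<le> k" using k3 by simp
  have cyc': "adj G (c i) (c (cycle_succ k i))" if "i < k" for i
    using cyc that Suc_mod_eq_cycle_succ by simp
  define pr where "pr = (\<lambda>i. if i = 0 then k - 1 else i - 1)"
  have prk: "pr i < k" if "i < k" for i using that k3 unfolding pr_def by auto
  have sp: "cycle_succ k (pr i) = i" if "i < k" for i using that k3 unfolding pr_def cycle_succ_def by auto
  have sk: "cycle_succ k i < k" if "i < k" for i using that k3 unfolding cycle_succ_def by auto
  have spne: "cycle_succ k i \<noteq> pr i" if "i < k" for i using that k3 unfolding pr_def cycle_succ_def by auto
  have ci: "c i = c j \<longleftrightarrow> i = j" if "i < k" "j < k" for i j using inj that unfolding inj_on_def by auto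
  have prc: "adj G (c i) (c (pr i))" if "i < k" for i
    using cyc'[OF prk[OF that]] sp[OF that] adj_commute by metis
  have nb: "z = c (cycle_succ k i) \<or> z = c (pr i)" if i: "i < k" and a: "adj G (c i) z" for i z
  proof -
    have "c (cycle_succ k i) \<noteq> c (pr i)" using ci[OF sk[OF i] prk[OF i]] spne[OF i] by simp
    then show ?thesis using d2 cyc'[OF i] prc[OF i] a unfolding max_degree_le_2_def by metis
  qed
  show "adj G (c i) (c j) \<longleftrightarrow> adj (cycle_graph k) i j" if i: "i < k" and j: "j < k" for i j
  proof
    assume "adj G (c i) (c j)"
    then have "c j = c (cycle_succ k i) \<or> c j = c (pr i)" using nb[OF i] by blast
    then have "j = cycle_succ k i \<or> j = pr i" using ci sk prk i j by blast
    then have "j = cycle_succ k i \<or> i = cycle_succ k j" using sp[OF i] by auto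
    then show "adj (cycle_graph k) i j" using adj_cycle_graph[OF k2] i j by simp
  next
    assume "adj (cycle_graph k) i j"
    then have "j = cycle_succ k i \<or> i = cycle_succ k j" using adj_cycle_graph[OF k2] by simp
    then show "adj G (c i) (c j)"
    proof
      assume "j = cycle_succ k i" then show ?thesis using cyc'[OF i] by simp
    next
      assume "i = cycle_succ k j" then show ?thesis using cyc'[OF j] adj_commute by metis
    qed
  qed
  show "z \<in> c ` {0..<k}" if i: "i < k" and a: "adj G (c i) z" for i z
    using nb[OF i a] sk[OF i] prk[OF i] by auto
qed

lemma cycle_graph_4_twins: "adj (cycle_graph 4) 0 j = adj (cycle_graph 4) 2 j"
  by (auto simp: adj_cycle_graph cycle_succ_def)

text \<open>Opposite vertices of a four-cycle in a graph of maximum degree two are non-adjacent twins.\<close>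

lemma point_determining_max_degree_le_2_cycle_ne_4:
  assumes pd: "point_determining G" and d2: "max_degree_le_2 G" and k3: "3 \<le> k"
    and inj: "inj_on c {0..<k}" and img: "c ` {0..<k} \<subseteq> verts G"
    and cyc: "\<forall>i<k. adj G (c i) (c (Suc i mod k))"
  shows "k \<noteq> 4"
proof
  assume k: "k = 4"
  note adjT = max_degree_le_2_cycle(1)[OF d2 k3 inj cyc]
    and closed = max_degree_le_2_cycle(2)[OF d2 k3 inj cyc]
  have "adj G (c 0) z = adj G (c 2) z" for z
  proof (cases "z \<in> c ` {0..<k}")
    case True
    then obtain j where "j < k" "z = c j" by auto
    then show ?thesis using adjT[of 0 j] adjT[of 2 j] cycle_graph_4_twins[of j] k by simp
  next
    case False
    then show ?thesis using closed[of 0 z] closed[of 2 z] k by auto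
  qed
  moreover have "c 0 \<noteq> c 2" using inj k unfolding inj_on_def by force
  moreover have "\<not> adj G (c 0) (c 2)" using adjT[of 0 2] cycle_graph_4_twins[of 2] k
    by (simp add: adj_cycle_graph cycle_succ_def)
  moreover have "c 0 \<in> verts G" "c 2 \<in> verts G" using img k by auto
  ultimately show False using pd unfolding point_determining_def by blast
qed

lemma isomorphism_induced_cycle:
  assumes inj: "inj_on c {0..<k}"
    and adjT: "\<And>i j. i < k \<Longrightarrow> j < k \<Longrightarrow> adj G (c i) (c j) \<longleftrightarrow> adj (cycle_graph k) i j"
  shows "isomorphism (inv_into {0..<k} c) (induced G (c ` {0..<k})) (cycle_graph k)"
proof -
  have "bij_betw c {0..<k} (c ` {0..<k})" using inj by (simp add: bij_betw_imageI)
  then have "bij_betw (inv_into {0..<k} c) (c ` {0..<k}) {0..<k}" by (rule bij_betw_inv_into)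
  moreover have "adj (induced G (c ` {0..<k})) x y
      = adj (cycle_graph k) (inv_into {0..<k} c x) (inv_into {0..<k} c y)"
    if xy: "x \<in> c ` {0..<k}" "y \<in> c ` {0..<k}" for x y
  proof -
    obtain i j where ij: "i < k" "j < k" "x = c i" "y = c j" using xy by auto
    then have "inv_into {0..<k} c x = i" "inv_into {0..<k} c y = j" using inj by auto
    then show ?thesis using ij adjT[OF ij(1,2)] by (simp add: adj_induced)
  qed
  ultimately show ?thesis unfolding isomorphism_def by simp
qed

lemma isomorphism_cycle_plus_vertex:
  assumes f: "isomorphism f (induced G T) (cycle_graph k)" and k: "2 \<le> k"
    and V: "verts G = insert u T" "u \<notin> T" and u: "\<And>z. \<not> adj G u z"
  shows "isomorphism (f(u := k)) G (cycle_plus_vertex k)"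
proof -
  have "bij_betw (f(u := k)) T {0..<k} = bij_betw f T {0..<k}"
    by (rule bij_betw_cong) (use V(2) in auto)
  then have "bij_betw (f(u := k)) T {0..<k}" using f unfolding isomorphism_def by simp
  then have "bij_betw (f(u := k)) (T \<union> {u}) ({0..<k} \<union> {(f(u := k)) u})"
    by (rule notIn_Un_bij_betw[OF V(2), rotated]) simp
  moreover have "T \<union> {u} = verts G" "{0..<k} \<union> {(f(u := k)) u} = verts (cycle_plus_vertex k)"
    using V(1) by auto
  ultimately have b: "bij_betw (f(u := k)) (verts G) (verts (cycle_plus_vertex k))" by simp
  have fT: "adj G x y = adj (cycle_graph k) (f x) (f y)" if "x \<in> T" "y \<in> T" for x y
    using f that unfolding isomorphism_def by (simp add: adj_induced)
  have "adj G x y = adj (cycle_plus_vertex k) ((f(u := k)) x) ((f(u := k)) y)"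
    if "x \<in> verts G" "y \<in> verts G" for x y
  proof (cases "x = u \<or> y = u")
    case True
    have "\<not> adj (cycle_plus_vertex k) k i" "\<not> adj (cycle_plus_vertex k) i k" for i
      by (simp_all add: adj_cycle_plus_vertex adj_cycle_graph[OF k])
    moreover have "\<not> adj G x y" using True u adj_commute[of G x y] by auto
    ultimately show ?thesis using True by auto
  next
    case False
    then have "x \<in> T" "y \<in> T" using that V(1) by auto
    then show ?thesis using fT False by (simp add: adj_cycle_plus_vertex)
  qed
  with b show ?thesis unfolding isomorphism_def by blast
qed

text \<open>After deleting a vertex \<open>u\<close> off a cycle of a minimal obstruction of maximum degree two,
  the full colouring is injective on the cycle, so it maps the cycle onto a cycle of \<open>H\<close>, which
  covers \<open>H\<close>; then every remaining vertex is a twin of a cycle vertex, hence lies on the cycle.\<close>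

lemma minimal_obstruction_cycle_spans:
  assumes wfH: "wf_graph H" and span: "spanning_cycles H" and ob: "minimal_obstruction H G"
    and d2: "max_degree_le_2 G" and k3: "3 \<le> k" and k4: "k \<noteq> 4" and inj: "inj_on c {0..<k}"
    and img: "c ` {0..<k} \<subseteq> verts G" and cyc: "\<forall>i<k. adj G (c i) (c (Suc i mod k))"
    and u: "u \<in> verts G" "u \<notin> c ` {0..<k}"
  shows "verts G = insert u (c ` {0..<k})"
proof -
  let ?T = "c ` {0..<k}"
  note closed = max_degree_le_2_cycle(2)[OF d2 k3 inj cyc]
  have isoT: "isomorphism (inv_into {0..<k} c) (induced G ?T) (cycle_graph k)"
    using isomorphism_induced_cycle[OF inj max_degree_le_2_cycle(1)[OF d2 k3 inj cyc]] .
  let ?S = "verts G - {u}"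
  have TS: "?T \<subseteq> ?S" using u img by blast
  have "?S \<subset> verts G" using u by blast
  then obtain \<phi> where \<phi>: "full_hom \<phi> (induced G ?S) H"
    using ob unfolding minimal_obstruction_def full_colourable_def by blast
  have \<phi>T: "full_hom \<phi> (induced G ?T) H"
    using full_hom_induced[OF \<phi>, of ?T] TS induced_induced[OF TS] by simp
  have "point_determining (induced G ?T)"
    using point_determining_isomorphism[OF isoT point_determining_cycle_graph[OF k3 k4]] .
  then have "inj_on \<phi> ?T" using full_hom_inj_on[OF \<phi>T wfH] by simp
  then have inj\<phi>: "inj_on (\<phi> \<circ> c) {0..<k}" using inj by (simp add: comp_inj_on)
  have A: "adj G x y = adj H (\<phi> x) (\<phi> y)" if "x \<in> ?S" "y \<in> ?S" for x y
    using \<phi> that unfolding full_hom_def by (simp add: adj_induced)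
  have cS: "c i \<in> ?S" if "i < k" for i
  proof -
    have "c i \<in> ?T" using that by simp
    then show ?thesis using TS by blast
  qed
  have succ: "cycle_succ k i < k" "adj G (c i) (c (cycle_succ k i))" if "i < k" for i
    using that k3 cyc Suc_mod_eq_cycle_succ[OF that] unfolding cycle_succ_def by auto
  have "adj H ((\<phi> \<circ> c) i) ((\<phi> \<circ> c) (cycle_succ k i))" if "i < k" for i
    using A[OF cS[OF that] cS[OF succ(1)[OF that]]] succ[OF that] by simp
  then have H: "\<phi> ` ?T = verts H"
    using span k3 inj\<phi> unfolding spanning_cycles_def image_comp by blast
  show "verts G = insert u ?T"
  proof
    show "verts G \<subseteq> insert u ?T"
    proof
      fix w assume w: "w \<in> verts G"
      show "w \<in> insert u ?T"
      proof (rule ccontr)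
        assume nw: "w \<notin> insert u ?T"
        then have wS: "w \<in> ?S" using w by blast
        then have "\<phi> w \<in> verts H" using \<phi> unfolding full_hom_def by simp
        then have "\<phi> w \<in> \<phi> ` ?T" using H by simp
        then obtain i where i: "i < k" "\<phi> w = \<phi> (c i)" by auto
        have "adj (induced G ?S) (c i) z = adj (induced G ?S) w z" if "z \<in> ?S" for z
          using full_hom_eq_imp_twins[OF \<phi> wfH, of "c i" w] cS[OF i(1)] wS i(2) that by simp
        from this[OF cS[OF succ(1)[OF i(1)]]] have "adj G w (c (cycle_succ k i))"
          using succ[OF i(1)] cS i(1) wS by (simp add: adj_induced)
        then have "w \<in> ?T" using closed[OF succ(1)[OF i(1)]] adj_commute by metis
        then show False using nw by blast
      qed
    qed
  qed (use u img in blast)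
qed

lemma minimal_obstruction_cycle_cases:
  assumes wfH: "wf_graph H" and span: "spanning_cycles H" and ob: "minimal_obstruction H G"
    and d2: "max_degree_le_2 G" and hc: "has_cycle (adj G) (verts G)"
  obtains k where "3 \<le> k" "k \<noteq> 4" "graph_iso G (cycle_graph k) \<or> graph_iso G (cycle_plus_vertex k)"
proof -
  have wfG: "wf_graph G" using ob unfolding minimal_obstruction_def by blast
  have pd: "point_determining G" using minimal_obstruction_point_determining[OF ob wfH] .
  obtain k c where k3: "3 \<le> k" and inj: "inj_on c {0..<k}" and img: "c ` {0..<k} \<subseteq> verts G"
    and cyc: "\<forall>i<k. adj G (c i) (c (Suc i mod k))"
    using hc unfolding has_cycle_def by blast
  note closed = max_degree_le_2_cycle(2)[OF d2 k3 inj cyc]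
  have k4: "k \<noteq> 4" using point_determining_max_degree_le_2_cycle_ne_4[OF pd d2 k3 inj img cyc] .
  let ?T = "c ` {0..<k}"
  have isoT: "isomorphism (inv_into {0..<k} c) (induced G ?T) (cycle_graph k)"
    using isomorphism_induced_cycle[OF inj max_degree_le_2_cycle(1)[OF d2 k3 inj cyc]] .
  show ?thesis
  proof (cases "?T = verts G")
    case True
    then have "graph_iso G (cycle_graph k)"
      using isoT induced_verts[OF wfG] unfolding graph_iso_iff_isomorphism by metis
    then show ?thesis using that k3 k4 by blast
  next
    case False
    then obtain u where u: "u \<in> verts G" "u \<notin> ?T" using img by blast
    have VT: "verts G = insert u ?T"
      using minimal_obstruction_cycle_spans[OF wfH span ob d2 k3 k4 inj img cyc u] .
    have uiso: "\<not> adj G u z" for z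
    proof
      assume a: "adj G u z"
      then have "z \<in> ?T" using wf_graph_adjD[OF wfG a] VT by auto
      then obtain j where "j < k" "z = c j" by auto
      then have "u \<in> ?T" using closed a adj_commute by metis
      then show False using u by blast
    qed
    have "isomorphism ((inv_into {0..<k} c)(u := k)) G (cycle_plus_vertex k)"
      using isomorphism_cycle_plus_vertex[OF isoT _ VT u(2) uiso] k3 by simp
    then show ?thesis using that k3 k4 unfolding graph_iso_iff_isomorphism by blast
  qed
qed

section \<open>Counting the obstructions\<close>

lemma card_le_card_representatives:
  assumes fin: "finite SS" and ni: "\<forall>G\<in>SS. \<forall>G'\<in>SS. G \<noteq> G' \<longrightarrow> \<not> graph_iso G G'"
    and finY: "finite Y" and rep: "\<forall>G\<in>SS. \<exists>y\<in>Y. graph_iso G (F y)"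
  shows "card SS \<le> card Y"
proof -
  define r where "r = (\<lambda>G. SOME y. y \<in> Y \<and> graph_iso G (F y))"
  have rP: "r G \<in> Y \<and> graph_iso G (F (r G))" if "G \<in> SS" for G
    unfolding r_def using someI_ex rep that by (metis (no_types, lifting))
  have "inj_on r SS"
  proof (rule inj_onI)
    fix G G' assume G: "G \<in> SS" and G': "G' \<in> SS" and e: "r G = r G'"
    have "graph_iso G (F (r G))" "graph_iso G' (F (r G))" using rP[OF G] rP[OF G'] e by auto
    then have "graph_iso G G'" using graph_iso_sym graph_iso_trans by blast
    then show "G = G'" using ni G G' by blast
  qed
  moreover have "r ` SS \<subseteq> Y" using rP by blast
  ultimately show ?thesis using card_inj_on_le finY by blast
qed

definition small_graphs :: "graph set" where
  "small_graphs = (\<lambda>(k, E). ({0..<k}, E)) ` ({..7} \<times> Pow (Pow {0..<7::nat}))"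

lemma finite_small_graphs: "finite small_graphs" unfolding small_graphs_def by simp

lemma small_graph_representative:
  assumes wf: "wf_graph G" and c: "card (verts G) \<le> 7"
  shows "\<exists>X\<in>small_graphs. graph_iso G X"
proof -
  have fin: "finite (verts G)" using wf unfolding wf_graph_def by blast
  obtain h where h: "bij_betw h (verts G) {0..<card (verts G)}" using ex_bij_betw_finite_nat[OF fin] by blast
  have inj: "inj_on h (verts G)" using h unfolding bij_betw_def by blast
  define X where "X = ({0..<card (verts G)}, (\<lambda>e. h ` e) ` edges G)"
  have W: "\<forall>e\<in>edges G. \<exists>x y. x \<noteq> y \<and> x \<in> verts G \<and> y \<in> verts G \<and> e = {x, y}"
    using wf unfolding wf_graph_def by simp
  have eV: "e \<subseteq> verts G" if ee: "e \<in> edges G" for e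
  proof -
    obtain x y where "x \<in> verts G" "y \<in> verts G" "e = {x, y}" using bspec[OF W ee] by blast
    then show ?thesis by simp
  qed
  have "(\<lambda>e. h ` e) ` edges G \<subseteq> Pow {0..<7}"
  proof
    fix e' assume "e' \<in> (\<lambda>e. h ` e) ` edges G"
    then obtain e where e: "e \<in> edges G" "e' = h ` e" by blast
    have "h ` e \<subseteq> {0..<card (verts G)}" using eV[OF e(1)] h unfolding bij_betw_def by blast
    then show "e' \<in> Pow {0..<7}" using e c by auto
  qed
  then have XC: "X \<in> small_graphs" unfolding small_graphs_def X_def using c by force
  have "adj G x y = adj X (h x) (h y)" if x: "x \<in> verts G" and y: "y \<in> verts G" for x y
  proof
    assume "adj G x y"
    then have "{x, y} \<in> edges G" unfolding adj_def .
    then have "h ` {x, y} \<in> (\<lambda>e. h ` e) ` edges G" by (rule imageI)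
    then have "{h x, h y} \<in> (\<lambda>e. h ` e) ` edges G" by simp
    then show "adj X (h x) (h y)" unfolding adj_def X_def edges_def by simp
  next
    assume "adj X (h x) (h y)"
    then obtain e where e: "e \<in> edges G" "h ` e = {h x, h y}" unfolding adj_def X_def edges_def by auto
    have "h ` e = h ` {x, y}" using e by simp
    moreover have "{x, y} \<subseteq> verts G" using x y by simp
    ultimately have "e = {x, y}" using inj_on_image_eq_iff[OF inj eV[OF e(1)]] by blast
    then show "adj G x y" using e unfolding adj_def by simp
  qed
  moreover have "bij_betw h (verts G) (verts X)" using h unfolding X_def verts_def by simp
  ultimately have "isomorphism h G X" unfolding isomorphism_def by blast
  then show ?thesis using XC graph_iso_iff_isomorphism by blast
qed

lemma consecutive_no_cycle:
  assumes k: "3 \<le> k" and inj: "inj_on g {0..<k}" and c: "\<forall>i<k. consecutive (g i) (g (cycle_succ k i))"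
  shows False
proof -
  have ne: "g ` {0..<k} \<noteq> {}" using k by auto
  define m where "m = Max (g ` {0..<k})"
  have "m \<in> g ` {0..<k}" unfolding m_def using ne by simp
  then obtain i where i: "i < k" "g i = m" by auto
  have mx: "g j \<le> m" if "j < k" for j unfolding m_def using that by simp
  define p where "p = (if i = 0 then k - 1 else i - 1)"
  have pk: "p < k" and sp: "cycle_succ k p = i" unfolding p_def cycle_succ_def using i k by auto
  have sk: "cycle_succ k i < k" unfolding cycle_succ_def using i k by auto
  have ne2: "cycle_succ k i \<noteq> p" unfolding p_def cycle_succ_def using i k by auto
  have l1: "consecutive m (g (cycle_succ k i))" using c i by auto
  have l2: "consecutive (g p) m" using c pk sp i by metis
  have "g (cycle_succ k i) = m - 1" using l1 mx[OF sk] unfolding consecutive_def by auto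
  moreover have "g p = m - 1" using l2 mx[OF pk] unfolding consecutive_def by auto
  ultimately have "g (cycle_succ k i) = g p" by simp
  then have "cycle_succ k i = p" using inj sk pk unfolding inj_on_def by auto
  then show False using ne2 by simp
qed

definition short_runs :: "nat set \<Rightarrow> bool" where
  "short_runs A \<longleftrightarrow> finite A \<and> (\<forall>s t. run A s t \<longrightarrow> t - s = 0 \<or> t - s = 1 \<or> t - s = 3 \<or> t - s = 5)"

definition run_profile :: "nat set \<Rightarrow> nat \<times> nat \<times> nat \<times> nat" where
  "run_profile A = (run_count A 0, run_count A 1, run_count A 3, run_count A 5)"

definition profile_forest :: "nat \<times> nat \<times> nat \<times> nat \<Rightarrow> graph" where
  "profile_forest y = linear_forest (SOME A. short_runs A \<and> run_profile A = y)"

text \<open>The possible run profiles of linear forest obstructions: at most one isolated vertex,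
  and weight \<open>2 a + 3 b + 5 c + 7 d\<close> equal to \<open>N + 1\<close> or \<open>N + 2\<close>.\<close>

definition forest_profiles :: "nat \<Rightarrow> (nat \<times> nat \<times> nat \<times> nat) set" where
  "forest_profiles N = {(a, b, c, d). a \<le> 1 \<and> b \<le> N + 2 \<and> c \<le> N + 2 \<and> d \<le> N + 2 \<and>
     (2 * a + 3 * b + 5 * c + 7 * d = N + 1 \<or> 2 * a + 3 * b + 5 * c + 7 * d = N + 2)}"

definition cycle_candidate :: "nat \<times> bool \<Rightarrow> graph" where
  "cycle_candidate y = (if snd y then cycle_plus_vertex (fst y) else cycle_graph (fst y))"

lemma short_runs_run_count_zero:
  assumes "short_runs A" "d \<noteq> 0" "d \<noteq> 1" "d \<noteq> 3" "d \<noteq> 5" shows "run_count A d = 0"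
proof -
  have E: "{p \<in> runs A. snd p - fst p = d} = {}"
  proof (rule equals0I)
    fix p assume p: "p \<in> {p \<in> runs A. snd p - fst p = d}"
    obtain s t where pd: "p = (s, t)" by (cases p) auto
    then have c: "run A s t" and e: "t - s = d" using p unfolding runs_def by auto
    have "t - s = 0 \<or> t - s = 1 \<or> t - s = 3 \<or> t - s = 5" using assms(1) c unfolding short_runs_def by blast
    then show False using e assms(2-5) by auto
  qed
  show ?thesis unfolding run_count_def E by simp
qed

lemma short_runs_run_count_eq:
  assumes "short_runs A" "short_runs B" "run_profile A = run_profile B" shows "\<forall>d. run_count A d = run_count B d"
proof
  fix d show "run_count A d = run_count B d"
  proof (cases "d = 0 \<or> d = 1 \<or> d = 3 \<or> d = 5")
    case True then show ?thesis using assms(3) unfolding run_profile_def by auto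
  next
    case False then show ?thesis using short_runs_run_count_zero[OF assms(1)] short_runs_run_count_zero[OF assms(2)] by auto
  qed
qed

lemma graph_iso_profile_forest:
  assumes "short_runs A" shows "graph_iso (linear_forest A) (profile_forest (run_profile A))"
proof -
  have ex: "\<exists>B. short_runs B \<and> run_profile B = run_profile A" using assms by blast
  define B where "B = (SOME B. short_runs B \<and> run_profile B = run_profile A)"
  have B: "short_runs B" "run_profile B = run_profile A" using someI_ex[OF ex] unfolding B_def by auto
  have "\<forall>d. run_count A d = run_count B d" using short_runs_run_count_eq[OF assms B(1)] B(2) by simp
  moreover have "finite A" using assms unfolding short_runs_def by simp
  moreover have "finite B" using B(1) unfolding short_runs_def by simp
  ultimately obtain h where h: "isomorphism h (linear_forest A) (linear_forest B)" using linear_forests_isomorphic_if_run_counts_eq by blast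
  have "profile_forest (run_profile A) = linear_forest B" unfolding profile_forest_def B_def by simp
  then show ?thesis using h unfolding graph_iso_iff_isomorphism by auto
qed

lemma finite_forest_profiles: "finite (forest_profiles N)"
proof -
  have "forest_profiles N \<subseteq> {..1} \<times> {..N+2} \<times> {..N+2} \<times> {..N+2}" unfolding forest_profiles_def by auto
  then show ?thesis by (rule finite_subset) simp
qed

lemma card_forest_profiles: "card (forest_profiles N) \<le> 2 * ((N + 3) * ((N + 3) * 2))"
proof -
  define \<pi> where "\<pi> = (\<lambda>(a::nat, b::nat, c::nat, d::nat). (a, b, c, 2 * a + 3 * b + 5 * c + 7 * d - (N + 1)))"
  have "inj_on \<pi> (forest_profiles N)"
  proof (rule inj_onI)
    fix x y assume x: "x \<in> forest_profiles N" and y: "y \<in> forest_profiles N" and e: "\<pi> x = \<pi> y"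
    obtain a b c d where xd: "x = (a, b, c, d)" by (cases x) auto
    obtain a' b' c' d' where yd: "y = (a', b', c', d')" by (cases y) auto
    show "x = y" using x y e unfolding xd yd \<pi>_def forest_profiles_def by auto
  qed
  moreover have "\<pi> ` forest_profiles N \<subseteq> {..1} \<times> {..N+2} \<times> {..N+2} \<times> {..1}"
    unfolding \<pi>_def forest_profiles_def by auto
  ultimately have "card (forest_profiles N) \<le> card ({..1::nat} \<times> {..N+2} \<times> {..N+2} \<times> {..1::nat})"
    by (intro card_inj_on_le) auto
  also have "\<dots> = 2 * ((N + 3) * ((N + 3) * 2))"
  proof -
    have a: "card {..1::nat} = 2" by simp
    have b: "card {..N+2} = N + 3" by simp
    show ?thesis unfolding card_cartesian_product a b ..
  qed
  finally show ?thesis .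
qed

lemma acyclic_obstruction_representative:
  assumes target: "admissible_target H N" and ob: "minimal_obstruction H G"
    and d2: "max_degree_le_2 G" and nc: "\<not> has_cycle (adj G) (verts G)"
  shows "\<exists>y\<in>forest_profiles N. graph_iso G (profile_forest y)"
proof -
  have wfG: "wf_graph G" using ob unfolding minimal_obstruction_def by blast
  obtain f A where finA: "finite A" and f: "isomorphism f G (linear_forest A)"
    using max_degree_le_2_acyclic_linear_forest[OF wfG d2 nc] .
  interpret linear_forest_obstruction H N A
    using target finA minimal_obstruction_isomorphism[OF ob f wf_graph_linear_forest[OF finA]]
    by unfold_locales (simp_all add: admissible_target_def)
  have runs: "\<forall>s t. run A s t \<longrightarrow> t - s = 0 \<or> t - s = 1 \<or> t - s = 3 \<or> t - s = 5"
    using run_length by blast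
  then have gA: "short_runs A" using finA unfolding short_runs_def by blast
  have x0: "run_count A 0 \<le> 1"
  proof -
    have fin0: "finite {p \<in> runs A. snd p - fst p = 0}" using finite_runs[OF finA] by simp
    have "\<forall>p\<in>{p \<in> runs A. snd p - fst p = 0}. \<forall>q\<in>{p \<in> runs A. snd p - fst p = 0}. p = q"
    proof (intro ballI)
      fix p q assume p: "p \<in> {p \<in> runs A. snd p - fst p = 0}" and q: "q \<in> {p \<in> runs A. snd p - fst p = 0}"
      obtain s t where pd: "p = (s, t)" by (cases p) auto
      obtain s' t' where qd: "q = (s', t')" by (cases q) auto
      have "run A s t" "t - s = 0" using p pd unfolding runs_def by auto
      then have cs: "run A s s" using runD(1)[OF \<open>run A s t\<close>] by simp
      then have "t = s" using \<open>t - s = 0\<close> runD(1)[OF \<open>run A s t\<close>] by simp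
      have "run A s' t'" "t' - s' = 0" using q qd unfolding runs_def by auto
      then have cs': "run A s' s'" using runD(1)[OF \<open>run A s' t'\<close>] by simp
      then have "t' = s'" using \<open>t' - s' = 0\<close> runD(1)[OF \<open>run A s' t'\<close>] by simp
      have "s = s'" using isolated_unique cs cs' by blast
      then show "p = q" using pd qd \<open>t = s\<close> \<open>t' = s'\<close> by simp
    qed
    then show ?thesis unfolding run_count_def using card_le_Suc0_iff_eq[OF fin0] by simp
  qed
  have "run_profile A \<in> forest_profiles N"
    using weight_gt weight_le forest_weight_eq_run_counts[OF finA runs] x0
    unfolding run_profile_def forest_profiles_def by auto
  moreover have "graph_iso G (profile_forest (run_profile A))"
    using graph_iso_trans[OF _ graph_iso_profile_forest[OF gA]] f graph_iso_iff_isomorphism by blast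
  ultimately show ?thesis by blast
qed

lemma cyclic_obstruction_representative:
  assumes target: "admissible_target H N" and ob: "minimal_obstruction H G"
    and d2: "max_degree_le_2 G" and hc: "has_cycle (adj G) (verts G)"
  shows "\<exists>y\<in>{..N} \<times> (UNIV :: bool set). graph_iso G (cycle_candidate y)"
proof -
  have wfH: "wf_graph H" and span: "spanning_cycles H" and density: "edge_density_bound H N"
    using target unfolding admissible_target_def by auto
  obtain k where k: "3 \<le> k" "k \<noteq> 4"
    and iso: "graph_iso G (cycle_graph k) \<or> graph_iso G (cycle_plus_vertex k)"
    using minimal_obstruction_cycle_cases[OF wfH span ob d2 hc] .
  from iso show ?thesis
  proof
    assume "graph_iso G (cycle_graph k)"
    then obtain f where f: "isomorphism f G (cycle_graph k)" unfolding graph_iso_iff_isomorphism ..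
    have "minimal_obstruction H (cycle_graph k)"
      using minimal_obstruction_isomorphism[OF ob f wf_graph_cycle_graph] k by simp
    then have "k \<le> N" using cycle_graph_obstruction_le[OF wfH density k] by blast
    moreover have "graph_iso G (cycle_candidate (k, False))"
      using \<open>graph_iso G (cycle_graph k)\<close> unfolding cycle_candidate_def by simp
    ultimately show ?thesis by blast
  next
    assume "graph_iso G (cycle_plus_vertex k)"
    then obtain f where f: "isomorphism f G (cycle_plus_vertex k)" unfolding graph_iso_iff_isomorphism ..
    have "minimal_obstruction H (cycle_plus_vertex k)"
      using minimal_obstruction_isomorphism[OF ob f wf_graph_cycle_plus_vertex] k by simp
    then have "k + 2 \<le> N" using cycle_plus_vertex_obstruction_le[OF wfH density k] by blast
    moreover have "graph_iso G (cycle_candidate (k, True))"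
      using \<open>graph_iso G (cycle_plus_vertex k)\<close> unfolding cycle_candidate_def by simp
    ultimately show ?thesis by force
  qed
qed

lemma degree_3_obstruction_representative:
  assumes target: "admissible_target H N" and ob: "minimal_obstruction H G" and d3: "\<not> max_degree_le_2 G"
  shows "\<exists>X\<in>small_graphs. graph_iso G X"
proof -
  have wfG: "wf_graph G" using ob unfolding minimal_obstruction_def by blast
  obtain x a b c where "adj G x a" "adj G x b" "adj G x c" "a \<noteq> b" "a \<noteq> c" "b \<noteq> c"
    using d3 unfolding max_degree_le_2_def by blast
  then have "card (verts G) \<le> 7"
    using minimal_obstruction_degree_3_card_le[OF _ _ ob] target unfolding admissible_target_def by blast
  then show ?thesis using small_graph_representative[OF wfG] by blast
qed

lemma admissible_target_obstructions_at_most: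
  assumes target: "admissible_target H N"
  shows "obstructions_up_to_iso_at_most H (real (card small_graphs + 2 * (N + 1) + 2 * ((N + 3) * ((N + 3) * 2))))"
  unfolding obstructions_up_to_iso_at_most_def
proof (intro allI impI)
  fix SS :: "graph set"
  assume fin: "finite SS" and ob: "\<forall>G\<in>SS. minimal_obstruction H G"
    and ni: "\<forall>G\<in>SS. \<forall>G'\<in>SS. G \<noteq> G' \<longrightarrow> \<not> graph_iso G G'"
  define S1 where "S1 = {G\<in>SS. \<not> max_degree_le_2 G}"
  define S2 where "S2 = {G\<in>SS. max_degree_le_2 G \<and> has_cycle (adj G) (verts G)}"
  define S3 where "S3 = {G\<in>SS. max_degree_le_2 G \<and> \<not> has_cycle (adj G) (verts G)}"
  have U: "SS = S1 \<union> S2 \<union> S3" unfolding S1_def S2_def S3_def by auto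
  have f1: "finite S1" "finite S2" "finite S3" using fin unfolding S1_def S2_def S3_def by auto
  have c1: "card S1 \<le> card small_graphs"
    by (rule card_le_card_representatives[where F = id]) (use f1 ni degree_3_obstruction_representative[OF target] ob finite_small_graphs in \<open>auto simp: S1_def\<close>)
  have c2: "card S2 \<le> card ({..N} \<times> (UNIV :: bool set))"
    by (rule card_le_card_representatives[where F = cycle_candidate]) (use f1 ni cyclic_obstruction_representative[OF target] ob in \<open>auto simp: S2_def\<close>)
  have c3: "card S3 \<le> card (forest_profiles N)"
    by (rule card_le_card_representatives[where F = profile_forest]) (use f1 ni acyclic_obstruction_representative[OF target] ob finite_forest_profiles in \<open>auto simp: S3_def\<close>)
  have "card ({..N} \<times> (UNIV :: bool set)) = 2 * (N + 1)" by (simp add: card_cartesian_product)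
  moreover have "card SS \<le> card (S1 \<union> S2) + card S3" using U card_Un_le[of "S1 \<union> S2" S3] by simp
  ultimately have "card SS \<le> card small_graphs + 2 * (N + 1) + 2 * ((N + 3) * ((N + 3) * 2))"
    using c1 c2 c3 card_forest_profiles[of N] card_Un_le[of S1 S2] by linarith
  then show "real (card SS) \<le> real (card small_graphs + 2 * (N + 1) + 2 * ((N + 3) * ((N + 3) * 2)))"
    by (simp only: of_nat_le_iff)
qed

lemma path_graph_linear_forest: "path_graph n = linear_forest {0..<n}"
proof -
  have "{{i, Suc i} | i. Suc i < n} = {{a, Suc a} | a. a \<in> {0..<n} \<and> Suc a \<in> {0..<n}}" by auto
  then show ?thesis unfolding path_graph_def linear_forest_def by simp
qed

lemma max_degree_le_2_linear_forest: "max_degree_le_2 (linear_forest A)"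
  unfolding max_degree_le_2_def adj_linear_forest consecutive_def by auto

lemma spanning_cycles_linear_forest: "spanning_cycles (linear_forest A)"
  unfolding spanning_cycles_def adj_linear_forest using consecutive_no_cycle by blast

lemma induced_path_prefix_path_graph: "induced_path_prefix (path_graph n) (n + 1)"
  unfolding induced_path_prefix_def path_graph_linear_forest by (auto simp: adj_linear_forest)

lemma edge_density_bound_path_graph: "edge_density_bound (path_graph n) (n + 1)"
  unfolding edge_density_bound_def path_graph_linear_forest
proof (intro allI impI)
  fix S assume S: "S \<subseteq> verts (linear_forest {0..<n})"
  then have S': "S \<subseteq> {0..<n}" by simp
  have finS: "finite S" using S' finite_subset by blast
  have E: "card {e \<in> edges (linear_forest {0..<n}). e \<subseteq> S} = card (edge_starts S)"
    using edges_linear_forest_subset[OF S'] card_edge_starts_image by simp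
  have "Suc ` run_ends S \<subseteq> {0..n} - S" using S' unfolding run_ends_def by auto
  moreover have "inj_on Suc (run_ends S)" by simp
  ultimately have "card (run_ends S) \<le> card ({0..n} - S)"
    by (metis card_image card_mono finite_Diff finite_atLeastAtMost)
  moreover have "card ({0..n} - S) = n + 1 - card S"
    using S' by (subst card_Diff_subset) (auto intro: finite_subset)
  ultimately have "card (run_ends S) + card S \<le> n + 1"
    using card_mono[of "{0..n}" S] S' by force
  then show "2 * card S \<le> n + 1 + card {e \<in> edges (linear_forest {0..<n}). e \<subseteq> S}"
    using E card_edge_starts_run_ends[OF finS] by linarith
qed

lemma admissible_target_path_graph: "admissible_target (path_graph n) (n + 1)"
  using edge_density_bound_path_graph induced_path_prefix_path_graph
    max_degree_le_2_linear_forest spanning_cycles_linear_forest wf_graph_linear_forest[of "{0..<n}"]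
  unfolding admissible_target_def path_graph_linear_forest by simp

lemma max_degree_le_2_cycle_graph:
  assumes n2: "2 \<le> n"
  shows "max_degree_le_2 (cycle_graph n)"
  unfolding max_degree_le_2_def
proof (intro allI impI)
  fix x a b c assume a: "adj (cycle_graph n) x a" and b: "adj (cycle_graph n) x b" and c: "adj (cycle_graph n) x c"
  have A: "x < n" "a < n" "b < n" "c < n" "a = cycle_succ n x \<or> x = cycle_succ n a" "b = cycle_succ n x \<or> x = cycle_succ n b"
    "c = cycle_succ n x \<or> x = cycle_succ n c" using a b c adj_cycle_graph[OF n2] by auto
  have "x = cycle_succ n p \<Longrightarrow> x = cycle_succ n q \<Longrightarrow> p < n \<Longrightarrow> q < n \<Longrightarrow> p = q" for p q using cycle_succ_inj by metis
  then show "a = b \<or> a = c \<or> b = c" using A by metis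
qed

lemma card_cycle_graph_edges_within:
  assumes n: "3 \<le> n" and S': "S \<subseteq> {0..<n}"
  shows "card {e \<in> edges (cycle_graph n). e \<subseteq> S} = card {i\<in>S. cycle_succ n i \<in> S}"
proof -
  have ES: "{e \<in> edges (cycle_graph n). e \<subseteq> S} = (\<lambda>i. {i, cycle_succ n i}) ` {i\<in>S. cycle_succ n i \<in> S}"
  proof
    show "{e \<in> edges (cycle_graph n). e \<subseteq> S} \<subseteq> (\<lambda>i. {i, cycle_succ n i}) ` {i\<in>S. cycle_succ n i \<in> S}"
    proof
      fix e assume "e \<in> {e \<in> edges (cycle_graph n). e \<subseteq> S}"
      then obtain i where i: "i < n" "e = {i, Suc i mod n}" "e \<subseteq> S"
        unfolding cycle_graph_def edges_def by auto
      then have "e = {i, cycle_succ n i}" using Suc_mod_eq_cycle_succ by simp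
      then show "e \<in> (\<lambda>i. {i, cycle_succ n i}) ` {i\<in>S. cycle_succ n i \<in> S}" using i by auto
    qed
    show "(\<lambda>i. {i, cycle_succ n i}) ` {i\<in>S. cycle_succ n i \<in> S} \<subseteq> {e \<in> edges (cycle_graph n). e \<subseteq> S}"
    proof
      fix e assume "e \<in> (\<lambda>i. {i, cycle_succ n i}) ` {i\<in>S. cycle_succ n i \<in> S}"
      then obtain i where i: "i \<in> S" "cycle_succ n i \<in> S" "e = {i, cycle_succ n i}" by auto
      have "i < n" using i S' by auto
      then have "e = {i, Suc i mod n}" using i Suc_mod_eq_cycle_succ by simp
      then have "e \<in> edges (cycle_graph n)" using \<open>i < n\<close> unfolding cycle_graph_def edges_def by auto
      then show "e \<in> {e \<in> edges (cycle_graph n). e \<subseteq> S}" using i by auto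
    qed
  qed
  have "inj_on (\<lambda>i. {i, cycle_succ n i}) {i\<in>S. cycle_succ n i \<in> S}"
  proof (rule inj_onI)
    fix i j assume i: "i \<in> {i\<in>S. cycle_succ n i \<in> S}" and j: "j \<in> {i\<in>S. cycle_succ n i \<in> S}"
      and e: "{i, cycle_succ n i} = {j, cycle_succ n j}"
    show "i = j"
    proof (rule ccontr)
      assume "i \<noteq> j"
      moreover have "(i = j \<and> cycle_succ n i = cycle_succ n j) \<or> (i = cycle_succ n j \<and> cycle_succ n i = j)"
        using e by (simp only: doubleton_eq_iff)
      ultimately have ij: "i = cycle_succ n j" "cycle_succ n i = j" by blast+
      show False
      proof (cases "Suc i = n")
        case True
        then have "j = 0" using ij(2) by (simp add: cycle_succ_def)
        then have "i = 1" using ij(1) n by (simp add: cycle_succ_def)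
        then show False using True n by simp
      next
        case False
        then have "j = Suc i" using ij(2) by (simp add: cycle_succ_def)
        with ij(1) have "i = cycle_succ n (Suc i)" by (simp only:)
        then have "i = (if Suc (Suc i) = n then 0 else Suc (Suc i))" by (simp only: cycle_succ_def)
        then show False using n by (simp split: if_splits)
      qed
    qed
  qed
  then show ?thesis using ES by (simp add: card_image)
qed

lemma edge_density_bound_cycle_graph:
  assumes n: "3 \<le> n"
  shows "edge_density_bound (cycle_graph n) n"
  unfolding edge_density_bound_def
proof (intro allI impI)
  fix S assume "S \<subseteq> verts (cycle_graph n)"
  then have S': "S \<subseteq> {0..<n}" by simp
  then have finS: "finite S" using finite_subset by blast
  have injs: "inj_on (cycle_succ n) {i\<in>S. cycle_succ n i \<notin> S}"
  proof (rule inj_onI)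
    fix x y assume "x \<in> {i\<in>S. cycle_succ n i \<notin> S}" "y \<in> {i\<in>S. cycle_succ n i \<notin> S}" "cycle_succ n x = cycle_succ n y"
    moreover have "x < n" "y < n" using calculation S' by auto
    ultimately show "x = y" using cycle_succ_inj by blast
  qed
  have "cycle_succ n ` {i\<in>S. cycle_succ n i \<notin> S} \<subseteq> {0..<n} - S"
    using S' n unfolding cycle_succ_def by auto
  then have "card (cycle_succ n ` {i\<in>S. cycle_succ n i \<notin> S}) \<le> card ({0..<n} - S)"
    by (intro card_mono) auto
  then have "card {i\<in>S. cycle_succ n i \<notin> S} \<le> card ({0..<n} - S)"
    using card_image[OF injs] by simp
  moreover have "card ({0..<n} - S) = n - card S"
    using S' by (subst card_Diff_subset) (auto intro: finite_subset)
  moreover have "card S \<le> n" using card_mono[of "{0..<n}" S] S' by simp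
  moreover have "card S = card {i\<in>S. cycle_succ n i \<in> S} + card {i\<in>S. cycle_succ n i \<notin> S}"
  proof -
    have "S = {i\<in>S. cycle_succ n i \<in> S} \<union> {i\<in>S. cycle_succ n i \<notin> S}" by auto
    moreover have "finite {i\<in>S. cycle_succ n i \<in> S}" "finite {i\<in>S. cycle_succ n i \<notin> S}" using finS by auto
    ultimately show ?thesis by (metis (no_types, lifting) card_Un_disjoint disjoint_iff mem_Collect_eq)
  qed
  ultimately show "2 * card S \<le> n + card {e \<in> edges (cycle_graph n). e \<subseteq> S}"
    using card_cycle_graph_edges_within[OF n S'] by linarith
qed

lemma induced_path_prefix_cycle_graph: "2 \<le> n \<Longrightarrow> induced_path_prefix (cycle_graph n) n"
  unfolding induced_path_prefix_def by (auto simp: adj_cycle_graph consecutive_def cycle_succ_def)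

lemma spanning_cycles_cycle_graph:
  assumes n2: "2 \<le> n"
  shows "spanning_cycles (cycle_graph n)"
  unfolding spanning_cycles_def
proof (intro allI impI)
  fix k g assume k: "3 \<le> k" and inj: "inj_on g {0..<k}" and a: "\<forall>i<k. adj (cycle_graph n) (g i) (g (cycle_succ k i))"
  have sk: "cycle_succ k i < k" if "i < k" for i using that k unfolding cycle_succ_def by auto
  have gn: "g i < n" if "i < k" for i using a that adj_cycle_graph[OF n2] by blast
  show "g ` {0..<k} = verts (cycle_graph n)"
  proof
    show "g ` {0..<k} \<subseteq> verts (cycle_graph n)" using gn by auto
    show "verts (cycle_graph n) \<subseteq> g ` {0..<k}"
    proof (rule ccontr)
      assume "\<not> ?thesis"
      then obtain j where j0: "j \<in> verts (cycle_graph n)" "j \<notin> g ` {0..<k}" by blast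
      then have j: "j < n" "j \<notin> g ` {0..<k}" by auto
      \<comment> \<open>rotating the missing vertex \<open>j\<close> to the end turns the rest of the cycle into a path\<close>
      define \<rho> where "\<rho> = (\<lambda>x. if j < x then x - j - 1 else x + n - 1 - j)"
      have gj: "g i \<noteq> j" if "i < k" for i using j that by auto
      have rl: "consecutive (\<rho> x) (\<rho> y)" if x: "x < n" "x \<noteq> j" and y: "y < n" "y \<noteq> j"
        and ad: "adj (cycle_graph n) x y" for x y
      proof -
        have "y = cycle_succ n x \<or> x = cycle_succ n y" using ad adj_cycle_graph[OF n2] by simp
        then show ?thesis using x y j unfolding \<rho>_def cycle_succ_def consecutive_def by (auto split: if_splits)
      qed
      have ri: "\<rho> x = \<rho> y \<Longrightarrow> x < n \<Longrightarrow> y < n \<Longrightarrow> x \<noteq> j \<Longrightarrow> y \<noteq> j \<Longrightarrow> x = y" for x y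
        using j unfolding \<rho>_def by (auto split: if_splits)
      have "inj_on (\<rho> \<circ> g) {0..<k}"
      proof (rule inj_onI)
        fix i i' assume i: "i \<in> {0..<k}" and i': "i' \<in> {0..<k}" and e: "(\<rho> \<circ> g) i = (\<rho> \<circ> g) i'"
        have "g i = g i'" using ri[of "g i" "g i'"] e gn gj i i' by auto
        then show "i = i'" using inj i i' unfolding inj_on_def by blast
      qed
      moreover have "\<forall>i<k. consecutive ((\<rho> \<circ> g) i) ((\<rho> \<circ> g) (cycle_succ k i))"
        using rl gn gj sk a by simp
      ultimately show False using consecutive_no_cycle[OF k] by blast
    qed
  qed
qed

lemma admissible_target_cycle_graph:
  assumes "3 \<le> n"
  shows "admissible_target (cycle_graph n) n"
  using assms wf_graph_cycle_graph max_degree_le_2_cycle_graph edge_density_bound_cycle_graph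
    induced_path_prefix_cycle_graph spanning_cycles_cycle_graph
  unfolding admissible_target_def by simp

lemma obstructions_up_to_iso_at_most_mono:
  "obstructions_up_to_iso_at_most H a \<Longrightarrow> a \<le> b \<Longrightarrow> obstructions_up_to_iso_at_most H b"
  unfolding obstructions_up_to_iso_at_most_def by (meson order_trans)

lemma quadratic_bound:
  fixes C N n :: nat
  assumes N: "N \<le> n + 1" and n: "1 \<le> n"
  shows "C + 2 * (N + 1) + 2 * ((N + 3) * ((N + 3) * 2)) \<le> (C + 106) * n ^ 2"
proof -
  define m where "m = n * n"
  define P where "P = (N + 3) * (N + 3)"
  have "P \<le> (n + 4) * (n + 4)" unfolding P_def using N by (intro mult_mono) auto
  also have "\<dots> = m + 8 * n + 16" unfolding m_def by (simp add: algebra_simps)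
  finally have "4 * P \<le> 4 * m + 32 * n + 64" by linarith
  moreover have "n \<le> m" "1 \<le> m" unfolding m_def using n by simp_all
  ultimately have "2 * (N + 1) + 4 * P \<le> 106 * m" using N by simp
  moreover have "2 * ((N + 3) * ((N + 3) * 2)) = 4 * P" unfolding P_def by simp
  ultimately have "C + 2 * (N + 1) + 2 * ((N + 3) * ((N + 3) * 2)) \<le> C + 106 * m" by simp
  also have "\<dots> \<le> (C + 106) * n ^ 2"
    using \<open>1 \<le> m\<close> unfolding m_def by (simp add: algebra_simps power2_eq_square)
  finally show ?thesis .
qed

lemma admissible_target_obstructions_quadratic:
  assumes H: "admissible_target H N" and N: "N \<le> n + 1" and n: "1 \<le> n"
  shows "obstructions_up_to_iso_at_most H (real (card small_graphs + 106) * real n ^ 2)"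
proof -
  have "real (card small_graphs + 2 * (N + 1) + 2 * ((N + 3) * ((N + 3) * 2)))
      \<le> real (card small_graphs + 106) * real n ^ 2"
    using quadratic_bound[OF N n, of "card small_graphs"] by (metis of_nat_le_iff of_nat_mult of_nat_power)
  then show ?thesis
    using obstructions_up_to_iso_at_most_mono[OF admissible_target_obstructions_at_most[OF H]] by blast
qed

theorem corollary4p3:
  shows "\<exists>c::real. \<forall>n::nat.
     (n \<ge> 1 \<longrightarrow> obstructions_up_to_iso_at_most (path_graph n) (c * real n ^ 2)) \<and>
     (n \<ge> 3 \<longrightarrow> obstructions_up_to_iso_at_most (cycle_graph n) (c * real n ^ 2))"
proof (intro exI[of _ "real (card small_graphs + 106)"] allI conjI impI)
  fix n :: nat
  assume "1 \<le> n"
  then show "obstructions_up_to_iso_at_most (path_graph n) (real (card small_graphs + 106) * real n ^ 2)"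
    using admissible_target_obstructions_quadratic[OF admissible_target_path_graph, of n] by simp
next
  fix n :: nat
  assume "3 \<le> n"
  then show "obstructions_up_to_iso_at_most (cycle_graph n) (real (card small_graphs + 106) * real n ^ 2)"
    using admissible_target_obstructions_quadratic[OF admissible_target_cycle_graph, of n n] by simp
qed

end
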